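(* Let $\chi=1$ and let $D_0:=|\det g|\,dg\otimes1\otimes1\in\mathcal S^*(\mathcal O_2)\otimes(|\det|\boxtimes|\det|^{-1})$, where $dg$ is a Haar measure on $\mathcal O_2=\mathrm{GL}_2(F)$; it spans the one-dimensional space $\mathcal S^*(\mathcal O_2)^\chi$. Then there exists $D_1\in\mathcal S^*(M_2)\otimes(|\det|\boxtimes|\det|^{-1})$ such that the restriction of $D_1$ to $\mathcal O_2$ equals $D_0$, and $D_1\in\mathcal S^*(M_2)^{\chi,\infty}\setminus\mathcal S^*(M_2)^{\chi}$.
   Context: $F$ nonarchimedean local field of characteristic $0$, $G=G'=\mathrm{GL}_2(F)$ acting on $M_2:=M_{2\times2}(F)$, $\mathcal O_2$ the set of invertible matrices. For $X\in\{M_2,\mathcal O_2\}$, $\mathcal S(X)$ is the space of locally constant compactly supported functions with $((g_1,g_2)f)(M)=f(g_1^{-1}Mg_2)$, $\mathcal S^*(X)$ its algebraic dual with contragredient action, and the restriction map $\mathcal S^*(M_2)\to\mathcal S^*(\mathcal O_2)$ is dual to extension by zero. For a character $\chi$ of $G$, $\mathcal S^*(X)^\chi$ is the space of $G$-invariant vectors (first factor) in $\mathcal S^*(X)\otimes(|\det|\boxtimes|\det|^{-1})\otimes\chi^{-1}$, and $\mathcal S^*(X)^{\chi,\infty}$ is the space of generalized $(G,\chi)$-invariant vectors in $\mathcal S^*(X)\otimes(|\det|\boxtimes|\det|^{-1})$, where $v$ is generalized $\chi$-invariant if for some $k\ge0$, $(g_0-\chi(g_0))\cdots(g_k-\chi(g_k))v=0$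 for all $g_0,\dots,g_k\in G$. *)

theory Defs
  imports "HOL-Analysis.Analysis"
begin

definition nonarch_local_field :: "('a::field_char_0 \<Rightarrow> real) \<Rightarrow> bool" where
  "nonarch_local_field absv \<longleftrightarrow>
     (\<forall>x. absv x \<ge> 0) \<and> (\<forall>x. absv x = 0 \<longleftrightarrow> x = 0) \<and>
     (\<forall>x y. absv (x * y) = absv x * absv y) \<and>
     (\<forall>x y. absv (x + y) \<le> max (absv x) (absv y)) \<and>
     (\<exists>x. absv x \<noteq> 0 \<and> absv x \<noteq> 1) \<and>
     \<comment> \<open>complete\<close>
     (\<forall>s::nat \<Rightarrow> 'a::field_char_0. (\<forall>e>0. \<exists>N. \<forall>m\<ge>N. \<forall>n\<ge>N. absv (s m - s n) < e) \<longrightarrow>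
         (\<exists>l. \<forall>e>0. \<exists>N. \<forall>n\<ge>N. absv (s n - l) < e)) \<and>
     \<comment> \<open>closed unit ball totally bounded (so compact: local compactness)\<close>
     (\<forall>e>0. \<exists>S. finite S \<and> S \<subseteq> {x. absv x \<le> 1} \<and>
         (\<forall>x. absv x \<le> 1 \<longrightarrow> (\<exists>s\<in>S. absv (x - s) < e))) \<and>
     \<comment> \<open>normalized: |uniformizer| = 1/q, q = size of residue field\<close>
     (\<exists>p. 0 < absv p \<and> absv p < 1 \<and> (\<forall>x. absv x < 1 \<longrightarrow> absv x \<le> absv p) \<and>
         real (card ((\<lambda>x. {y. absv y \<le> 1 \<and> absv (y - x) < 1}) ` {x. absv x \<le> 1}))
           = 1 / absv p)"

type_synonym 'a mat2 = "'a^2^2"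

definition mdist :: "('a::field \<Rightarrow> real) \<Rightarrow> 'a mat2 \<Rightarrow> 'a mat2 \<Rightarrow> real" where
  "mdist absv M N = Max {absv (M$i$j - N$i$j) | i j. True}"

definition GL2 :: "'a::field mat2 set" where
  "GL2 = {M. det M \<noteq> 0}"

definition compact_M :: "('a::field \<Rightarrow> real) \<Rightarrow> 'a mat2 set \<Rightarrow> bool" where
  "compact_M absv K \<longleftrightarrow> (\<forall>s::nat \<Rightarrow> 'a::field mat2. (\<forall>n. s n \<in> K) \<longrightarrow>
      (\<exists>l\<in>K. \<exists>r::nat\<Rightarrow>nat. strict_mono r \<and> (\<forall>e>0. \<exists>N. \<forall>n\<ge>N. mdist absv (s (r n)) l < e)))"

text \<open>Schwartz space S(X) for X = M_2 (UNIV) or X = O_2 (GL2); functions on X are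
represented as functions on M_2 vanishing off X (extension by zero).\<close>
definition Sch :: "('a::field \<Rightarrow> real) \<Rightarrow> 'a mat2 set \<Rightarrow> ('a mat2 \<Rightarrow> complex) set" where
  "Sch absv X = {f. (\<forall>M. M \<notin> X \<longrightarrow> f M = 0) \<and>
      (\<forall>M\<in>X. \<exists>r>0. \<forall>N\<in>X. mdist absv N M < r \<longrightarrow> f N = f M) \<and>
      (\<exists>K. K \<subseteq> X \<and> compact_M absv K \<and> {M\<in>X. f M \<noteq> 0} \<subseteq> K)}"

text \<open>Elements of the algebraic dual S*(X) (only values on S(X) are relevant).\<close>
definition is_dist :: "('a::field \<Rightarrow> real) \<Rightarrow> 'a mat2 set \<Rightarrow> (('a mat2 \<Rightarrow> complex) \<Rightarrow> complex) \<Rightarrow> bool" where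
  "is_dist absv X D \<longleftrightarrow> (\<forall>f\<in>Sch absv X. \<forall>h\<in>Sch absv X. \<forall>c::complex.
       D (\<lambda>M. f M + h M) = D f + D h \<and> D (\<lambda>M. c * f M) = c * D f)"

text \<open>Action of g in G (first factor) on S*(X) tensor (|det| boxtimes |det|^-1):
(g D)(f) = |det g| D(f(g .)).\<close>
definition act :: "('a::field \<Rightarrow> real) \<Rightarrow> 'a mat2 \<Rightarrow> (('a mat2 \<Rightarrow> complex) \<Rightarrow> complex)
     \<Rightarrow> ('a mat2 \<Rightarrow> complex) \<Rightarrow> complex" where
  "act absv g D = (\<lambda>f. complex_of_real (absv (det g)) * D (\<lambda>M. f (g ** M)))"

definition invariant1 :: "('a::field \<Rightarrow> real) \<Rightarrow> 'a mat2 set \<Rightarrow> (('a mat2 \<Rightarrow> complex) \<Rightarrow> complex) \<Rightarrow> bool" where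
  "invariant1 absv X D \<longleftrightarrow> (\<forall>g\<in>GL2. \<forall>f\<in>Sch absv X. act absv g D f = D f)"

definition iter_op :: "('a::field \<Rightarrow> real) \<Rightarrow> 'a mat2 list \<Rightarrow> (('a mat2 \<Rightarrow> complex) \<Rightarrow> complex)
     \<Rightarrow> ('a mat2 \<Rightarrow> complex) \<Rightarrow> complex" where
  "iter_op absv gs D = foldr (\<lambda>g E. (\<lambda>f. act absv g E f - E f)) gs D"

definition gen_invariant1 :: "('a::field \<Rightarrow> real) \<Rightarrow> 'a mat2 set \<Rightarrow> (('a mat2 \<Rightarrow> complex) \<Rightarrow> complex) \<Rightarrow> bool" where
  "gen_invariant1 absv X D \<longleftrightarrow> (\<exists>k::nat. \<forall>gs. length gs = Suc k \<longrightarrow> set gs \<subseteq> GL2 \<longrightarrow>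
      (\<forall>f\<in>Sch absv X. iter_op absv gs D f = 0))"

definition haar :: "('a::field \<Rightarrow> real) \<Rightarrow> (('a mat2 \<Rightarrow> complex) \<Rightarrow> complex) \<Rightarrow> bool" where
  "haar absv dg \<longleftrightarrow> is_dist absv GL2 dg \<and> (\<exists>f\<in>Sch absv GL2. dg f \<noteq> 0) \<and>
     (\<forall>f\<in>Sch absv GL2. (\<forall>M. Im (f M) = 0 \<and> Re (f M) \<ge> 0) \<longrightarrow> Im (dg f) = 0 \<and> Re (dg f) \<ge> 0) \<and>
     (\<forall>g\<in>GL2. \<forall>f\<in>Sch absv GL2. dg (\<lambda>M. f (g ** M)) = dg f)"

end

theory Submission
  imports Defs "HOL-Library.Diagonal_Subsequence"
begin

text \<open>For a Schwartz function \<open>f\<close> on \<open>M\<^sub>2\<close>, split the integral of \<open>|det g| f(g) dg\<close> over the shells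
  \<open>|det g| = \<rho>\<^sup>n\<close>, \<open>\<rho> = 1/q\<close>. The shell integrals vanish for very negative \<open>n\<close>, and for large \<open>n\<close> they equal
  \<open>A + B \<rho>\<^sup>n\<close>: after rescaling \<open>f\<close> lives on \<open>M\<^sub>2(O)\<close>, whose shells are disjoint unions of cosets
  \<open>h K(r)\<close> of a congruence subgroup, \<open>h\<close> running over Hermite normal forms
  \<open>[[\<pi>\<^sup>a, 0], [c, \<pi>\<^sup>n\<^sup>-\<^sup>a]]\<close> times representatives of \<open>GL\<^sub>2(O)/K(r)\<close>, and counting these gives a constant
  plus a geometric sequence. \<open>D\<^sub>1 f\<close> is the sum over all shells, with the divergent constant tail
  \<open>\<Sum>n\<ge>N. A\<close> regularized to \<open>-N A\<close>. Translating by \<open>g\<close> with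
  \<open>|det g| = \<rho>\<^sup>m\<close> shifts the shells by \<open>m\<close>, so \<open>(g - 1) D\<^sub>1 f = m A(f)\<close> where \<open>A\<close> is invariant; hence
  \<open>(g - 1)(g' - 1) D\<^sub>1 = 0\<close>, while \<open>\<pi> I\<close> moves \<open>D\<^sub>1\<close> by \<open>2 A\<close>, nonzero on the indicator of \<open>M\<^sub>2(O)\<close>.\<close>

section \<open>Two-by-two matrices\<close>

lemma matrix_diff_ldistrib: "(A::'a::ring_1^'n^'m) ** (B - C) = A ** B - A ** C"
  by (simp add: matrix_matrix_mult_def vec_eq_iff right_diff_distrib sum_subtractf)

lemma matrix_diff_rdistrib: "((A::'a::ring_1^'n^'m) - B) ** C = A ** C - B ** C"
  by (simp add: matrix_matrix_mult_def vec_eq_iff left_diff_distrib sum_subtractf)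

lemma mat_mult_nth: "(mat x ** (M::'a::semiring_1^'n^'m)) $ i $ j = x * M $ i $ j"
  by (simp add: matrix_matrix_mult_def mat_def if_distrib[where f="\<lambda>c. c * _"] cong: if_cong)

lemma mult_entry: "((A::'a::semiring_1 mat2) ** B)$i$j = A$i$1 * B$1$j + A$i$2 * B$2$j"
  by (simp add: matrix_matrix_mult_def sum_2)

lemma mat2_eq: "(M::'a mat2) = N \<longleftrightarrow> M$1$1 = N$1$1 \<and> M$1$2 = N$1$2 \<and> M$2$1 = N$2$1 \<and> M$2$2 = N$2$2"
  by (auto simp: vec_eq_iff forall_2)

definition matrix2 :: "'a \<Rightarrow> 'a \<Rightarrow> 'a \<Rightarrow> 'a \<Rightarrow> 'a mat2" where
  "matrix2 a b c d = (\<chi> i j. if i = 1 then (if j = 1 then a else b) else (if j = 1 then c else d))"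

lemma matrix2_nth [simp]:
  "matrix2 a b c d $ 1 $ 1 = a" "matrix2 a b c d $ 1 $ 2 = b"
  "matrix2 a b c d $ 2 $ 1 = c" "matrix2 a b c d $ 2 $ 2 = d"
  by (simp_all add: matrix2_def)

lemma mat2_mat_nth [simp]:
  "(mat x :: 'a::zero mat2) $ 1 $ 1 = x" "(mat x :: 'a mat2) $ 1 $ 2 = 0"
  "(mat x :: 'a mat2) $ 2 $ 1 = 0" "(mat x :: 'a mat2) $ 2 $ 2 = x"
  by (simp_all add: mat_def)

lemma det_matrix2: "det (matrix2 a b c d :: 'a::comm_ring_1 mat2) = a * d - b * c"
  by (simp add: det_2)

definition inv2 :: "'a::field mat2 \<Rightarrow> 'a mat2" where
  "inv2 g = matrix2 (g$2$2 / det g) (- g$1$2 / det g) (- g$2$1 / det g) (g$1$1 / det g)"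

lemma inv2_left: "det g \<noteq> 0 \<Longrightarrow> inv2 g ** g = mat 1"
  by (simp add: mat2_eq mult_entry inv2_def field_simps) (simp_all add: det_2 algebra_simps)

lemma inv2_right: "det g \<noteq> 0 \<Longrightarrow> g ** inv2 g = mat 1"
  by (simp add: mat2_eq mult_entry inv2_def field_simps) (simp_all add: det_2 algebra_simps)

lemma inv2_cancel: "det g \<noteq> 0 \<Longrightarrow> inv2 g ** (g ** M) = M"
  by (simp add: matrix_mul_assoc inv2_left)

lemma inv2_cancel': "det g \<noteq> 0 \<Longrightarrow> g ** (inv2 g ** M) = M"
  by (simp add: matrix_mul_assoc inv2_right)

lemma det_inv2: "det g \<noteq> 0 \<Longrightarrow> det (inv2 g) = inverse (det g)"
  using det_mul[of "inv2 g" g] inv2_left[of g] by (simp add: field_simps)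

section \<open>Regularized sums of sequences with a geometric tail\<close>

locale geometric_tail =
  fixes q :: complex
  assumes q_nonzero: "q \<noteq> 0" and q_ne_1: "q \<noteq> 1"
begin

definition geom_tail :: "(int \<Rightarrow> complex) \<Rightarrow> int \<Rightarrow> int \<Rightarrow> complex \<Rightarrow> complex \<Rightarrow> bool" where
  "geom_tail x L N A B \<longleftrightarrow> L \<le> N \<and> (\<forall>n<L. x n = 0) \<and> (\<forall>n\<ge>N. x n = A + B * q powi n)"

text \<open>The geometric part of the tail is summed as \<open>\<Sum>n\<ge>N. B q^n = B q^N / (1 - q)\<close>; the divergent
  constant part \<open>\<Sum>n\<ge>N. A\<close> is assigned \<open>-N A\<close>, the only choice that makes the value independent of \<open>N\<close>.\<close>
definition reg_value :: "(int \<Rightarrow> complex) \<Rightarrow> int \<Rightarrow> int \<Rightarrow> complex \<Rightarrow> complex \<Rightarrow> complex" where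
  "reg_value x L N A B = (\<Sum>n\<in>{L..<N}. x n) - of_int N * A + B * q powi N / (1 - q)"

lemma q_powi_add: "q powi (m + n) = q powi m * q powi n"
  using q_nonzero by (simp add: power_int_add)

lemma geom_tail_coeffs_unique:
  assumes "geom_tail x L N A B" "geom_tail x L' N' A' B'"
  shows "A = A' \<and> B = B'"
proof -
  define n where "n = max N N'"
  have "A + B * q powi n = A' + B' * q powi n" "A + B * q powi (n + 1) = A' + B' * q powi (n + 1)"
    using assms unfolding geom_tail_def n_def by (metis max.cobounded1 max.cobounded2 add_increasing2 zero_le_one)+
  hence "(B - B') * (q powi n * (1 - q)) = 0"
    unfolding q_powi_add power_int_1_right by algebra
  moreover have "q powi n * (1 - q) \<noteq> 0" using q_nonzero q_ne_1 by simp
  ultimately have "B = B'" using q_nonzero by simp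
  thus ?thesis using \<open>A + B * q powi n = A' + B' * q powi n\<close> by simp
qed

lemma geom_tail_mono: "geom_tail x L N A B \<Longrightarrow> L' \<le> L \<Longrightarrow> N \<le> N' \<Longrightarrow> geom_tail x L' N' A B"
  unfolding geom_tail_def by auto

lemma reg_value_lower:
  assumes "geom_tail x L N A B" "L' \<le> L"
  shows "reg_value x L' N A B = reg_value x L N A B"
proof -
  have "{L'..<N} = {L'..<L} \<union> {L..<N}" using assms unfolding geom_tail_def by auto
  hence "(\<Sum>n\<in>{L'..<N}. x n) = (\<Sum>n\<in>{L'..<L}. x n) + (\<Sum>n\<in>{L..<N}. x n)"
    by (simp add: sum.union_disjoint)
  moreover have "(\<Sum>n\<in>{L'..<L}. x n) = 0" using assms unfolding geom_tail_def by simp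
  ultimately show ?thesis unfolding reg_value_def by simp
qed

lemma reg_value_upper:
  assumes "geom_tail x L N A B"
  shows "reg_value x L (N + int j) A B = reg_value x L N A B"
proof (induction j)
  case (Suc j)
  let ?M = "N + int j"
  have "L \<le> ?M" and xM: "x ?M = A + B * q powi ?M" using assms unfolding geom_tail_def by simp_all
  hence "{L..<?M + 1} = insert ?M {L..<?M}" by auto
  hence "(\<Sum>n\<in>{L..<?M + 1}. x n) = (\<Sum>n\<in>{L..<?M}. x n) + x ?M" by simp
  moreover have "B * q powi (?M + 1) / (1 - q) = B * q powi ?M / (1 - q) - B * q powi ?M"
    using q_ne_1 by (simp add: q_powi_add field_simps)
  ultimately have "reg_value x L (?M + 1) A B = reg_value x L ?M A B"
    unfolding reg_value_def using xM by (simp add: algebra_simps)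
  thus ?case using Suc.IH by (simp add: ac_simps)
qed simp

lemma reg_value_unique:
  assumes "geom_tail x L N A B" "geom_tail x L' N' A' B'"
  shows "reg_value x L N A B = reg_value x L' N' A' B'"
proof -
  have AB: "A' = A" "B' = B" using geom_tail_coeffs_unique assms by auto
  define L0 where "L0 = min L L'"
  define M where "M = max N N'"
  have v0: "geom_tail x L0 N A B" "geom_tail x L0 N' A B"
    using assms AB unfolding geom_tail_def L0_def by auto
  have "reg_value x L N A B = reg_value x L0 M A B"
    using reg_value_lower[OF assms(1), of L0] reg_value_upper[OF v0(1), of "nat (M - N)"]
    unfolding L0_def M_def by simp
  also have "\<dots> = reg_value x L' N' A B"
    using reg_value_lower[of x L' N' A B L0] assms(2) reg_value_upper[OF v0(2), of "nat (M - N')"]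
    unfolding AB L0_def M_def by simp
  finally show ?thesis using AB by simp
qed

definition reg_sum :: "(int \<Rightarrow> complex) \<Rightarrow> complex" where
  "reg_sum x = (SOME v. \<exists>L N A B. geom_tail x L N A B \<and> v = reg_value x L N A B)"

definition tail_const :: "(int \<Rightarrow> complex) \<Rightarrow> complex" where
  "tail_const x = (SOME A. \<exists>L N B. geom_tail x L N A B)"

lemma reg_sum_eq:
  assumes "geom_tail x L N A B"
  shows "reg_sum x = reg_value x L N A B"
proof -
  have "\<exists>L N A B. geom_tail x L N A B \<and> reg_sum x = reg_value x L N A B"
    unfolding reg_sum_def by (rule someI_ex) (use assms in blast)
  thus ?thesis using reg_value_unique[OF assms] by metis
qed

lemma tail_const_eq:
  assumes "geom_tail x L N A B"
  shows "tail_const x = A"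
proof -
  have "\<exists>L N B. geom_tail x L N (tail_const x) B"
    unfolding tail_const_def by (rule someI_ex) (use assms in blast)
  thus ?thesis using geom_tail_coeffs_unique[OF assms] by blast
qed

lemma reg_sum_add:
  assumes "geom_tail x L1 N1 A1 B1" "geom_tail y L2 N2 A2 B2"
  shows "reg_sum (\<lambda>n. x n + y n) = reg_sum x + reg_sum y"
proof -
  define L where "L = min L1 L2"
  define N where "N = max N1 N2"
  have vx: "geom_tail x L N A1 B1" and vy: "geom_tail y L N A2 B2"
    using geom_tail_mono[OF assms(1)] geom_tail_mono[OF assms(2)] L_def N_def by simp_all
  hence "geom_tail (\<lambda>n. x n + y n) L N (A1 + A2) (B1 + B2)"
    unfolding geom_tail_def by (auto simp: algebra_simps)
  moreover have "reg_value (\<lambda>n. x n + y n) L N (A1 + A2) (B1 + B2) = reg_value x L N A1 B1 + reg_value y L N A2 B2"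
    unfolding reg_value_def by (simp add: sum.distrib algebra_simps add_divide_distrib)
  ultimately show ?thesis using reg_sum_eq vx vy by simp
qed

lemma geom_tail_scale: "geom_tail x L N A B \<Longrightarrow> geom_tail (\<lambda>n. c * x n) L N (c * A) (c * B)"
  unfolding geom_tail_def by (auto simp: algebra_simps)

lemma reg_sum_scale:
  assumes "geom_tail x L N A B"
  shows "reg_sum (\<lambda>n. c * x n) = c * reg_sum x"
proof -
  have "reg_value (\<lambda>n. c * x n) L N (c * A) (c * B) = c * reg_value x L N A B"
    unfolding reg_value_def by (simp add: sum_distrib_left algebra_simps)
  thus ?thesis using reg_sum_eq[OF geom_tail_scale[OF assms]] reg_sum_eq[OF assms] by simp
qed

lemma geom_tail_shift: "geom_tail x L N A B \<Longrightarrow> geom_tail (\<lambda>n. x (n + m)) (L - m) (N - m) A (B * q powi m)"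
  unfolding geom_tail_def by (auto simp: q_powi_add algebra_simps)

lemma reg_sum_shift:
  assumes "geom_tail x L N A B"
  shows "reg_sum (\<lambda>n. x (n + m)) = reg_sum x + of_int m * A"
proof -
  have "(\<Sum>n\<in>{L - m..<N - m}. x (n + m)) = (\<Sum>k\<in>{L..<N}. x k)"
    by (rule sum.reindex_bij_witness[of _ "\<lambda>k. k - m" "\<lambda>n. n + m"]) auto
  moreover have "q powi m * q powi (N - m) = q powi N" using q_powi_add[of m "N - m"] by simp
  ultimately have "reg_value (\<lambda>n. x (n + m)) (L - m) (N - m) A (B * q powi m) = reg_value x L N A B + of_int m * A"
    unfolding reg_value_def by (simp add: algebra_simps)
  thus ?thesis using reg_sum_eq[OF geom_tail_shift[OF assms]] reg_sum_eq[OF assms] by simp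
qed

lemma reg_sum_finite:
  assumes "L \<le> N" "\<And>n. n < L \<or> n \<ge> N \<Longrightarrow> x n = 0"
  shows "reg_sum x = (\<Sum>n\<in>{L..<N}. x n)"
proof -
  have "geom_tail x L N 0 0" using assms unfolding geom_tail_def by auto
  thus ?thesis using reg_sum_eq unfolding reg_value_def by simp
qed

end

section \<open>Nonarchimedean local fields\<close>

locale nonarch_field =
  fixes absv :: "'a::field_char_0 \<Rightarrow> real"
  assumes nlf: "nonarch_local_field absv"
begin

lemma av_nonneg[simp]: "absv x \<ge> 0" using nlf unfolding nonarch_local_field_def by blast

lemma av_zero_iff[simp]: "absv x = 0 \<longleftrightarrow> x = 0" using nlf unfolding nonarch_local_field_def by blast

lemma av_0[simp]: "absv 0 = 0" by simp

lemma av_mult: "absv (x*y) = absv x * absv y" using nlf unfolding nonarch_local_field_def by blast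

lemma av_ultra: "absv (x+y) \<le> max (absv x) (absv y)" using nlf unfolding nonarch_local_field_def by blast

lemma av_pos[simp]: "absv x > 0 \<longleftrightarrow> x \<noteq> 0" using av_nonneg[of x] av_zero_iff[of x] by linarith

lemma av_1[simp]: "absv 1 = 1"
proof -
  have "absv 1 = absv 1 * absv 1" using av_mult[of 1 1] by simp
  moreover have "absv 1 \<noteq> 0" by simp
  ultimately show ?thesis by (metis mult_cancel_left1)
qed

lemma av_m1: "absv (-1) = 1"
proof -
  have "absv (-1) * absv (-1) = 1" using av_mult[of "-1" "-1"] by simp
  moreover have "absv (-1) \<ge> 0" by simp
  ultimately show ?thesis by (metis abs_of_nonneg abs_square_eq_1 power2_eq_square)
qed

lemma av_minus[simp]: "absv (-x) = absv x"
  using av_mult[of "-1" x] av_m1 by simp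

lemma av_sym: "absv (x - y) = absv (y - x)"
  by (metis av_minus minus_diff_eq)

lemma av_inverse: "absv (inverse x) = inverse (absv x)"
proof (cases "x = 0")
  case False
  have "absv (inverse x) * absv x = 1" using av_mult[of "inverse x" x] False by simp
  moreover have "absv x \<noteq> 0" using False by simp
  ultimately show ?thesis by (metis inverse_unique mult.commute)
qed simp

lemma av_divide: "absv (x / y) = absv x / absv y"
  by (simp add: divide_inverse av_mult av_inverse)

lemma av_power: "absv (x ^ n) = absv x ^ n"
  by (induction n) (auto simp: av_mult)

lemma av_diff: "absv (x - y) \<le> max (absv x) (absv y)"
  using av_ultra[of x "-y"] by simp

lemma av_ultra_eq: "absv y < absv x \<Longrightarrow> absv (x + y) = absv x"
proof -
  assume a: "absv y < absv x"
  have "absv (x+y) \<le> absv x" using av_ultra[of x y] a by simp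
  moreover have "absv x \<le> max (absv (x+y)) (absv y)" using av_ultra[of "x+y" "-y"] by simp
  ultimately show ?thesis using a by auto
qed

lemma av_add_le: "absv x \<le> e \<Longrightarrow> absv y \<le> e \<Longrightarrow> absv (x+y) \<le> e"
  using av_ultra[of x y] by simp

lemma av_diff_le: "absv x \<le> e \<Longrightarrow> absv y \<le> e \<Longrightarrow> absv (x-y) \<le> e"
  using av_diff[of x y] by simp

text \<open>The residue classes of \<open>O/p\<close>, as open unit balls inside the closed unit ball \<open>O\<close>. The
  normalization clause of \<open>nonarch_local_field\<close> provides an element of largest absolute value below 1,
  i.e.\ a uniformizer, whose absolute value is \<open>1/q\<close> for the residue field size \<open>q\<close>.\<close>
definition residue_classes :: "'a set set" where
  "residue_classes = (\<lambda>x. {y. absv y \<le> 1 \<and> absv (y - x) < 1}) ` {x. absv x \<le> 1}"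

definition unif :: 'a where
  "unif = (SOME p. 0 < absv p \<and> absv p < 1 \<and> (\<forall>x. absv x < 1 \<longrightarrow> absv x \<le> absv p) \<and>
         real (card residue_classes) = 1 / absv p)"

lemma unif_props: "0 < absv unif" "absv unif < 1" "\<And>x. absv x < 1 \<Longrightarrow> absv x \<le> absv unif"
   "real (card residue_classes) = 1 / absv unif"
proof -
  have "\<exists>p. 0 < absv p \<and> absv p < 1 \<and> (\<forall>x. absv x < 1 \<longrightarrow> absv x \<le> absv p) \<and>
         real (card residue_classes) = 1 / absv p"
    using nlf unfolding nonarch_local_field_def residue_classes_def by blast
  from someI_ex[OF this] show "0 < absv unif" "absv unif < 1" "\<And>x. absv x < 1 \<Longrightarrow> absv x \<le> absv unif"
   "real (card residue_classes) = 1 / absv unif" unfolding unif_def[symmetric] by auto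
qed

abbreviation \<rho> where "\<rho> \<equiv> absv unif"

lemma rho_pos: "0 < \<rho>" and rho_lt1: "\<rho> < 1" using unif_props by auto

lemma unif_nz[simp]: "unif \<noteq> 0" using rho_pos by auto

lemma av_less_1_le_rho: "absv x < 1 \<Longrightarrow> absv x \<le> \<rho>" using unif_props(3) by auto

definition q_res :: nat where "q_res = card residue_classes"

lemma q_res_rho: "real q_res = 1 / \<rho>" using unif_props(4) q_res_def by simp

lemma rho_q_res: "\<rho> = 1 / real q_res"
  unfolding q_res_rho by simp

lemma q_res_ge2: "q_res \<ge> 2"
proof -
  have "1 / \<rho> > 1" using rho_pos rho_lt1 by simp
  hence "real q_res > 1" using q_res_rho by simp
  thus ?thesis by linarith
qed

lemma cauchy_convergent: fixes s :: "nat \<Rightarrow> 'a" shows "(\<forall>e>0. \<exists>N. \<forall>m\<ge>N. \<forall>n\<ge>N. absv (s m - s n) < e) \<Longrightarrow>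
         (\<exists>l. \<forall>e>0. \<exists>N. \<forall>n\<ge>N. absv (s n - l) < e)"
proof -
  have complete: "\<forall>s::nat \<Rightarrow> 'a. (\<forall>e>0. \<exists>N. \<forall>m\<ge>N. \<forall>n\<ge>N. absv (s m - s n) < e) \<longrightarrow>
         (\<exists>l. \<forall>e>0. \<exists>N. \<forall>n\<ge>N. absv (s n - l) < e)"
    using nlf unfolding nonarch_local_field_def by (elim conjE) assumption
  assume "\<forall>e>0. \<exists>N. \<forall>m\<ge>N. \<forall>n\<ge>N. absv (s m - s n) < e"
  thus ?thesis using complete by blast
qed

lemma av_le1_eq_rho_power:
  assumes "x \<noteq> 0" "absv x \<le> 1"
  shows "\<exists>n::nat. absv x = \<rho> ^ n"
proof -
  have "\<exists>n. \<rho> ^ n < absv x" using real_arch_pow_inv[of "absv x" \<rho>] assms rho_lt1 by simp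
  then obtain n0 where n0: "\<rho> ^ n0 < absv x" by blast
  have "\<rho> ^ Suc n0 \<le> \<rho> ^ n0" using rho_pos rho_lt1 by (simp add: power_decreasing)
  hence "\<rho> ^ Suc n0 < absv x" using n0 by linarith
  define n where "n = (LEAST n. \<rho> ^ Suc n < absv x)"
  have n1: "\<rho> ^ Suc n < absv x" unfolding n_def by (rule LeastI, fact)
  have n2: "absv x \<le> \<rho> ^ n"
  proof (cases n)
    case 0 thus ?thesis using assms by simp
  next
    case (Suc m)
    have "\<not> \<rho> ^ Suc m < absv x" using not_less_Least[of m "\<lambda>n. \<rho> ^ Suc n < absv x"] Suc n_def by simp
    thus ?thesis using Suc by simp
  qed
  define y where "y = x / unif ^ n"
  have ay: "absv y = absv x / \<rho> ^ n" unfolding y_def by (simp add: av_divide av_power)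
  have rho_pow: "\<rho> ^ n > 0" using rho_pos by simp
  have "absv y * \<rho> ^ n \<le> 1 * \<rho> ^ n" using ay n2 rho_pow by (simp add: field_simps)
  hence "absv y \<le> 1" using rho_pow by (rule mult_right_le_imp_le)
  moreover have "\<rho> * \<rho> ^ n < absv y * \<rho> ^ n" using ay n1 rho_pow by (simp add: field_simps)
  hence "absv y > \<rho>" using rho_pow by (simp add: mult_less_cancel_right)
  ultimately have "absv y = 1" using av_less_1_le_rho[of y] by force
  hence "absv x = \<rho> ^ n" using ay rho_pow by (simp add: field_simps)
  thus ?thesis by blast
qed

lemma av_eq_rho_powi:
  assumes "x \<noteq> 0"
  shows "\<exists>m::int. absv x = \<rho> powi m"
proof (cases "absv x \<le> 1")
  case True
  then obtain n::nat where "absv x = \<rho> ^ n" using av_le1_eq_rho_power assms by blast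
  thus ?thesis by (metis power_int_of_nat)
next
  case False
  have "absv (inverse x) \<le> 1" using False by (simp add: av_inverse inverse_le_1_iff)
  moreover have "inverse x \<noteq> 0" using assms by simp
  ultimately obtain n::nat where "absv (inverse x) = \<rho> ^ n" using av_le1_eq_rho_power by blast
  hence "absv x = \<rho> powi (- int n)" by (simp add: av_inverse power_int_minus) (metis inverse_inverse_eq)
  thus ?thesis by blast
qed

lemma rho_pow_small: "e > 0 \<Longrightarrow> \<exists>k. \<rho> ^ k < e"
  using real_arch_pow_inv[of e \<rho>] rho_lt1 by simp

lemma rho_pow_antimono: "k \<le> n \<Longrightarrow> \<rho> ^ n \<le> \<rho> ^ k"
  using rho_pos rho_lt1 by (simp add: power_decreasing)

lemma inverse_rho_pow_mono: "k \<le> n \<Longrightarrow> inverse \<rho> ^ k \<le> inverse \<rho> ^ n"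
  using rho_pos rho_lt1 by (simp add: one_less_inverse power_increasing)

lemma rho_pow_le_1: "\<rho> ^ r \<le> 1" using rho_pos rho_lt1 by (simp add: power_le_one)

lemma inverse_rho_pow_ge: "\<exists>s::nat. c \<le> inverse \<rho> ^ s"
proof -
  have "1 < inverse \<rho>" using rho_pos rho_lt1 by (simp add: one_less_inverse)
  from real_arch_pow[OF this, of c] show ?thesis by (blast intro: less_imp_le)
qed

lemma rho_powi_pos: "\<rho> powi n > 0"
  using rho_pos by simp

lemma rho_powi_strict_decreasing: "m < n \<Longrightarrow> \<rho> powi n < \<rho> powi m"
  using power_int_strict_decreasing rho_pos rho_lt1 by blast

lemma rho_powi_less_iff: "\<rho> powi m < \<rho> powi n \<longleftrightarrow> n < m"
  using rho_powi_strict_decreasing[of n m] rho_powi_strict_decreasing[of m n]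
  by (cases m n rule: linorder_cases) auto

lemma rho_powi_le_iff: "\<rho> powi m \<le> \<rho> powi n \<longleftrightarrow> n \<le> m"
  using rho_powi_less_iff[of n m] by linarith

lemma rho_powi_inj: "\<rho> powi m = \<rho> powi n \<longleftrightarrow> m = n"
  using rho_powi_le_iff[of m n] rho_powi_le_iff[of n m] by linarith

definition residue_class :: "'a \<Rightarrow> 'a set" where "residue_class x = {y. absv y \<le> 1 \<and> absv (y - x) < 1}"

lemma residue_classes_eq: "residue_classes = residue_class ` {x. absv x \<le> 1}" unfolding residue_classes_def residue_class_def by simp

lemma residue_class_eq: "absv (x - x') < 1 \<Longrightarrow> residue_class x = residue_class x'"
  unfolding residue_class_def
proof (safe)
  fix y assume "absv (x - x') < 1" "absv (y - x) < 1"
  have "y - x' = (y - x) + (x - x')" by simp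
  thus "absv (y - x') < 1" using av_ultra[of "y-x" "x-x'"] \<open>absv (x - x') < 1\<close> \<open>absv (y - x) < 1\<close> by simp
next
  fix y assume "absv (x - x') < 1" "absv (y - x') < 1"
  have "y - x = (y - x') + (x' - x)" by simp
  thus "absv (y - x) < 1" using av_ultra[of "y-x'" "x'-x"] \<open>absv (x - x') < 1\<close> \<open>absv (y - x') < 1\<close> av_sym[of x x'] by simp
qed

lemma residue_class_self: "absv x \<le> 1 \<Longrightarrow> x \<in> residue_class x" unfolding residue_class_def by simp

definition digits :: "'a set" where "digits = (\<lambda>B. SOME y. y \<in> B) ` residue_classes"

lemma some_in_residue_class: "absv x \<le> 1 \<Longrightarrow> (SOME y. y \<in> residue_class x) \<in> residue_class x"
  using residue_class_self by (rule someI)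

lemma residue_class_some_eq: "absv x \<le> 1 \<Longrightarrow> residue_class (SOME y. y \<in> residue_class x) = residue_class x"
proof -
  assume "absv x \<le> 1"
  hence "absv ((SOME y. y \<in> residue_class x) - x) < 1" using some_in_residue_class[of x] unfolding residue_class_def by simp
  thus ?thesis by (rule residue_class_eq)
qed

lemma finite_residue_classes: "finite residue_classes"
proof (rule ccontr)
  assume "infinite residue_classes" hence "q_res = 0" unfolding q_res_def by simp
  thus False using q_res_ge2 by simp
qed

lemma digits_O: "d \<in> digits \<Longrightarrow> absv d \<le> 1"
  unfolding digits_def residue_classes_eq using some_in_residue_class unfolding residue_class_def by fastforce

lemma digits_ex: "absv x \<le> 1 \<Longrightarrow> \<exists>d\<in>digits. absv (x - d) \<le> \<rho>"
proof -
  assume x: "absv x \<le> 1"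
  let ?d = "SOME y. y \<in> residue_class x"
  have "?d \<in> digits" unfolding digits_def residue_classes_eq using x by blast
  moreover have "absv (?d - x) < 1" using some_in_residue_class[OF x] unfolding residue_class_def by simp
  hence "absv (x - ?d) \<le> \<rho>" using av_less_1_le_rho av_sym by metis
  ultimately show ?thesis by blast
qed

lemma digits_uniq: "d \<in> digits \<Longrightarrow> d' \<in> digits \<Longrightarrow> absv (d - d') \<le> \<rho> \<Longrightarrow> d = d'"
proof -
  assume d: "d \<in> digits" and d': "d' \<in> digits" and dd: "absv (d - d') \<le> \<rho>"
  obtain x where x: "absv x \<le> 1" "d = (SOME y. y \<in> residue_class x)" using d unfolding digits_def residue_classes_eq by blast
  obtain x' where x': "absv x' \<le> 1" "d' = (SOME y. y \<in> residue_class x')" using d' unfolding digits_def residue_classes_eq by blast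
  have "residue_class x = residue_class d" using residue_class_some_eq[OF x(1)] x(2) by simp
  also have "\<dots> = residue_class d'" using dd rho_lt1 by (intro residue_class_eq) simp
  also have "\<dots> = residue_class x'" using residue_class_some_eq[OF x'(1)] x'(2) by simp
  finally show "d = d'" using x x' by simp
qed

lemma digits_finite: "finite digits" unfolding digits_def using finite_residue_classes by simp

lemma digits_card: "card digits = q_res"
proof -
  have "inj_on (\<lambda>B. SOME y. y \<in> B) residue_classes"
  proof (rule inj_onI)
    fix B1 B2 assume "B1 \<in> residue_classes" "B2 \<in> residue_classes" "(SOME y. y \<in> B1) = (SOME y. y \<in> B2)"
    then obtain x1 x2 where "absv x1 \<le> 1" "absv x2 \<le> 1" "B1 = residue_class x1" "B2 = residue_class x2"
      "(SOME y. y \<in> residue_class x1) = (SOME y. y \<in> residue_class x2)" unfolding residue_classes_eq by blast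
    thus "B1 = B2" using residue_class_some_eq by metis
  qed
  thus ?thesis unfolding digits_def q_res_def by (simp add: card_image)
qed

text \<open>Truncated expansions \<open>\<Sum>i<b. d\<^sub>i \<pi>\<^sup>i\<close> with digits \<open>d\<^sub>i\<close>: a set of representatives of \<open>O/p\<^sup>b\<close>.\<close>
primrec reps_mod :: "nat \<Rightarrow> 'a set" where
  "reps_mod 0 = {0}"
| "reps_mod (Suc b) = (\<lambda>(d,c). d + unif * c) ` (digits \<times> reps_mod b)"

lemma av_unif_mult_le: "absv (unif * x) \<le> \<rho> * e \<longleftrightarrow> absv x \<le> e"
  using rho_pos by (simp add: av_mult)

lemma reps_mod_O: "c \<in> reps_mod b \<Longrightarrow> absv c \<le> 1"
proof (induction b arbitrary: c)
  case (Suc b)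
  then obtain d c' where "d \<in> digits" "c' \<in> reps_mod b" "c = d + unif * c'" by auto
  moreover have "absv (unif * c') \<le> 1" using Suc.IH[OF \<open>c' \<in> reps_mod b\<close>] rho_lt1 av_mult[of unif c'] rho_pos
    by (simp add: mult_le_one)
  ultimately show ?case using digits_O by (metis av_add_le)
qed simp

lemma reps_mod_ex: "absv x \<le> 1 \<Longrightarrow> \<exists>c\<in>reps_mod b. absv (x - c) \<le> \<rho> ^ b"
proof (induction b arbitrary: x)
  case 0 thus ?case by simp
next
  case (Suc b)
  obtain d where d: "d \<in> digits" "absv (x - d) \<le> \<rho>" using digits_ex Suc.prems by blast
  define y where "y = (x - d) / unif"
  have "absv y \<le> 1" using d rho_pos by (simp add: y_def av_divide)
  then obtain c where c: "c \<in> reps_mod b" "absv (y - c) \<le> \<rho> ^ b" using Suc.IH by blast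
  have "x - (d + unif * c) = unif * (y - c)" unfolding y_def by (simp add: field_simps)
  hence "absv (x - (d + unif * c)) \<le> \<rho> ^ Suc b" using c(2) by (simp add: av_mult rho_pos)
  moreover have "d + unif * c \<in> reps_mod (Suc b)" using d c by auto
  ultimately show ?case by blast
qed

lemma reps_mod_uniq: "c \<in> reps_mod b \<Longrightarrow> c' \<in> reps_mod b \<Longrightarrow> absv (c - c') \<le> \<rho> ^ b \<Longrightarrow> c = c'"
proof (induction b arbitrary: c c')
  case 0 thus ?case by simp
next
  case (Suc b)
  obtain d e where de: "d \<in> digits" "e \<in> reps_mod b" "c = d + unif * e" using Suc.prems by auto
  obtain d' e' where de': "d' \<in> digits" "e' \<in> reps_mod b" "c' = d' + unif * e'" using Suc.prems by auto
  have "\<rho> ^ Suc b \<le> \<rho>" using rho_pos rho_lt1 by (simp add: power_le_one mult_left_le)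
  hence h: "absv (c - c') \<le> \<rho>" using Suc.prems(3) by linarith
  have "absv (unif * (e - e')) \<le> \<rho>"
    using av_mult[of unif "e - e'"] reps_mod_O[OF de(2)] reps_mod_O[OF de'(2)] av_diff_le[of e 1 e'] rho_pos
    by (simp add: mult_le_cancel_left1)
  moreover have "d - d' = (c - c') - unif * (e - e')" using de de' by (simp add: algebra_simps)
  ultimately have "absv (d - d') \<le> \<rho>" using h av_diff_le by metis
  hence dd: "d = d'" using digits_uniq de de' by blast
  hence "absv (unif * (e - e')) \<le> \<rho> * \<rho> ^ b" using Suc.prems(3) de de' by (simp add: algebra_simps)
  hence "absv (e - e') \<le> \<rho> ^ b" by (simp add: av_unif_mult_le)
  hence "e = e'" using Suc.IH de de' by blast
  thus ?case using dd de de' by simp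
qed

lemma reps_mod_finite: "finite (reps_mod b)" by (induction b) (auto simp: digits_finite)

lemma reps_mod_card: "card (reps_mod b) = q_res ^ b"
proof (induction b)
  case (Suc b)
  have "inj_on (\<lambda>(d,c). d + unif * c) (digits \<times> reps_mod b)"
  proof (rule inj_onI, clarify)
    fix d c d' c' assume a: "d \<in> digits" "c \<in> reps_mod b" "d' \<in> digits" "c' \<in> reps_mod b" "d + unif * c = d' + unif * c'"
    have "d + unif * c \<in> reps_mod (Suc b)" "d' + unif * c' \<in> reps_mod (Suc b)" using a by auto
    have "absv (d - d') \<le> \<rho>"
    proof -
      have "d - d' = unif * (c' - c)" using a(5) by (simp add: algebra_simps)
      thus ?thesis using reps_mod_O[OF a(2)] reps_mod_O[OF a(4)] av_diff_le[of c' 1 c] rho_pos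
        by (simp add: av_mult mult_le_cancel_left1)
    qed
    hence "d = d'" using digits_uniq a by blast
    thus "d = d' \<and> c = c'" using a(5) by simp
  qed
  thus ?case using Suc by (simp add: card_image card_cartesian_product digits_card)
qed simp

lemma reps_mod_split: "reps_mod (r + t) = (\<lambda>(c1,c2). c1 + unif ^ r * c2) ` (reps_mod r \<times> reps_mod t)"
proof (induction r)
  case 0
  show ?case by (force simp: image_iff)
next
  case (Suc r)
  have "reps_mod (Suc r + t) = (\<lambda>(d,c). d + unif * c) ` (digits \<times> reps_mod (r + t))" by simp
  also have "\<dots> = {d + unif * (c1 + unif ^ r * c2) | d c1 c2. d \<in> digits \<and> c1 \<in> reps_mod r \<and> c2 \<in> reps_mod t}"
    unfolding Suc by (auto simp: image_iff)
  also have "\<dots> = (\<lambda>(c1,c2). c1 + unif ^ Suc r * c2) ` (reps_mod (Suc r) \<times> reps_mod t)"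
    by (auto simp: image_iff algebra_simps, (blast)+)
  finally show ?case .
qed

lemma reps_mod_split_inj: "inj_on (\<lambda>(c1,c2). c1 + unif ^ r * c2) (reps_mod r \<times> reps_mod t)"
proof (rule inj_onI, clarify)
  fix c1 c2 c1' c2' assume a: "c1 \<in> reps_mod r" "c2 \<in> reps_mod t" "c1' \<in> reps_mod r" "c2' \<in> reps_mod t"
    "c1 + unif ^ r * c2 = c1' + unif ^ r * c2'"
  have "c1 - c1' = unif ^ r * (c2' - c2)" using a(5) by (simp add: algebra_simps)
  hence "absv (c1 - c1') \<le> \<rho> ^ r" using reps_mod_O[OF a(2)] reps_mod_O[OF a(4)] av_diff_le[of c2' 1 c2]
    by (simp add: av_mult av_power mult_le_cancel_left1 rho_pos)
  hence "c1 = c1'" using reps_mod_uniq a by blast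
  thus "c1 = c1' \<and> c2 = c2'" using a(5) by simp
qed

lemma reps_mod_sum_mod:
  fixes G :: "'a \<Rightarrow> complex"
  assumes "r \<le> b" and G: "\<And>c c'. absv c \<le> 1 \<Longrightarrow> absv (c - c') \<le> \<rho> ^ r \<Longrightarrow> G c = G c'"
  shows "(\<Sum>c\<in>reps_mod b. G c) = of_nat (q_res ^ (b - r)) * (\<Sum>c\<in>reps_mod r. G c)"
proof -
  have b: "b = r + (b - r)" using assms by simp
  have "(\<Sum>c\<in>reps_mod b. G c) = (\<Sum>c\<in>reps_mod (r + (b - r)). G c)" using b by simp
  also have "\<dots> = (\<Sum>x\<in>reps_mod r \<times> reps_mod (b - r). G (case x of (c1,c2) \<Rightarrow> c1 + unif ^ r * c2))"
    unfolding reps_mod_split by (subst sum.reindex[OF reps_mod_split_inj]) (simp add: case_prod_beta)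
  also have "\<dots> = (\<Sum>x\<in>reps_mod r \<times> reps_mod (b - r). G (fst x))"
  proof (rule sum.cong, simp)
    fix x assume "x \<in> reps_mod r \<times> reps_mod (b - r)"
    then obtain c1 c2 where x: "x = (c1, c2)" and "c1 \<in> reps_mod r" "c2 \<in> reps_mod (b - r)" by blast
    have "absv (c1 + unif ^ r * c2 - c1) \<le> \<rho> ^ r" using reps_mod_O[OF \<open>c2 \<in> reps_mod (b - r)\<close>]
      by (simp add: av_mult av_power mult_le_cancel_left1 rho_pos)
    moreover have "absv (c1 + unif ^ r * c2) \<le> 1" using reps_mod_split[of r "b-r"] \<open>c1 \<in> reps_mod r\<close> \<open>c2 \<in> reps_mod (b - r)\<close> reps_mod_O
      by blast
    ultimately show "G (case x of (c1, c2) \<Rightarrow> c1 + unif ^ r * c2) = G (fst x)" using G x by simp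
  qed
  also have "\<dots> = (\<Sum>c1\<in>reps_mod r. \<Sum>c2\<in>reps_mod (b-r). G c1)"
    using sum.cartesian_product[of "\<lambda>c1 c2. G c1" "reps_mod (b-r)" "reps_mod r"] by (simp add: case_prod_beta)
  also have "\<dots> = of_nat (q_res ^ (b - r)) * (\<Sum>c\<in>reps_mod r. G c)" by (simp add: reps_mod_card sum_distrib_right sum_distrib_left mult.commute)
  finally show ?thesis .
qed

lemma av_close_eq: "absv (x - y) < absv y \<Longrightarrow> absv x = absv y"
  using av_ultra_eq[of "x - y" y] by simp

lemma unit_ball_subseq_close:
  fixes s :: "nat \<Rightarrow> 'a"
  assumes s: "\<And>n. absv (s n) \<le> 1"
  shows "\<exists>\<sigma>::nat\<Rightarrow>nat. strict_mono \<sigma> \<and> (\<exists>c. \<forall>n. absv (s (\<sigma> n) - c) \<le> \<rho> ^ k)"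
proof -
  have "\<forall>n. \<exists>c. c \<in> reps_mod k \<and> absv (s n - c) \<le> \<rho> ^ k" using reps_mod_ex[OF s] by blast
  then obtain h where h: "\<And>n. h n \<in> reps_mod k \<and> absv (s n - h n) \<le> \<rho> ^ k" by metis
  have "finite (range h)" using h reps_mod_finite[of k] by (meson finite_subset image_subset_iff)
  then obtain n0 where inf: "infinite {n. h n = h n0}" using pigeonhole_infinite[of UNIV h] by auto
  define \<sigma> where "\<sigma> = enumerate {n. h n = h n0}"
  have "strict_mono \<sigma>" unfolding \<sigma>_def using inf by (intro strict_monoI enumerate_mono)
  moreover have "absv (s (\<sigma> n) - h n0) \<le> \<rho> ^ k" for n
    using enumerate_in_set[OF inf, of n] h[of "\<sigma> n"] unfolding \<sigma>_def by simp
  ultimately show ?thesis by blast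
qed

lemma unit_ball_cauchy_convergent:
  fixes s :: "nat \<Rightarrow> 'a"
  assumes s: "\<And>n. absv (s n) \<le> 1" and cauchy: "\<forall>e>0. \<exists>N. \<forall>m\<ge>N. \<forall>n\<ge>N. absv (s m - s n) < e"
  shows "\<exists>l. absv l \<le> 1 \<and> (\<forall>e>0. \<exists>N. \<forall>n\<ge>N. absv (s n - l) < e)"
proof -
  obtain l where l: "\<forall>e>0. \<exists>N. \<forall>n\<ge>N. absv (s n - l) < e" using cauchy_convergent[OF cauchy] by blast
  have "absv l \<le> 1"
  proof (rule ccontr)
    assume "\<not> absv l \<le> 1"
    hence "absv l > 0" by linarith
    then obtain N where "\<forall>n\<ge>N. absv (s n - l) < absv l" using l by blast
    hence "absv (s N) = absv l" using av_close_eq by blast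
    thus False using s[of N] \<open>\<not> absv l \<le> 1\<close> by simp
  qed
  thus ?thesis using l by blast
qed

text \<open>Bolzano--Weierstrass for the unit ball \<open>O\<close>: a diagonal sequence of subsequences clustering at
  scales \<open>\<rho>^k\<close> is Cauchy.\<close>
lemma unit_ball_seq_compact:
  fixes s :: "nat \<Rightarrow> 'a"
  assumes s: "\<And>n. absv (s n) \<le> 1"
  shows "\<exists>l (\<sigma>::nat\<Rightarrow>nat). strict_mono \<sigma> \<and> absv l \<le> 1 \<and> (\<forall>e>0. \<exists>N. \<forall>n\<ge>N. absv (s (\<sigma> n) - l) < e)"
proof -
  interpret S: subseqs "\<lambda>k \<sigma>. \<exists>c. \<forall>n. absv (s (\<sigma> n) - c) \<le> \<rho> ^ k"
  proof
    fix k and \<sigma> :: "nat \<Rightarrow> nat"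
    obtain \<tau> :: "nat \<Rightarrow> nat" and c where "strict_mono \<tau>" "\<forall>n. absv ((s \<circ> \<sigma>) (\<tau> n) - c) \<le> \<rho> ^ k"
      using unit_ball_subseq_close[of "s \<circ> \<sigma>" k] s by auto
    thus "\<exists>\<tau>::nat \<Rightarrow> nat. strict_mono \<tau> \<and> (\<exists>c. \<forall>n. absv (s ((\<sigma> \<circ> \<tau>) n) - c) \<le> \<rho> ^ k)"
      by auto
  qed
  let ?d = S.diagseq
  have cau: "absv (s (?d m) - s (?d n)) \<le> \<rho> ^ k" if "m \<ge> Suc k" "n \<ge> Suc k" for m n k
  proof -
    have "\<exists>c. \<forall>n. absv (s ((?d \<circ> (+) (Suc k)) n) - c) \<le> \<rho> ^ k"
      by (rule S.diagseq_holds) auto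
    then obtain c where c: "\<forall>n. absv (s (?d (Suc k + n)) - c) \<le> \<rho> ^ k" by auto
    have "absv (s (?d m) - c) \<le> \<rho> ^ k" "absv (s (?d n) - c) \<le> \<rho> ^ k"
      using c[rule_format, of "m - Suc k"] c[rule_format, of "n - Suc k"] that by simp_all
    moreover have "s (?d m) - s (?d n) = (s (?d m) - c) - (s (?d n) - c)" by simp
    ultimately show ?thesis using av_diff_le[of "s (?d m) - c" "\<rho> ^ k" "s (?d n) - c"] by simp
  qed
  have "\<forall>e>0. \<exists>N. \<forall>m\<ge>N. \<forall>n\<ge>N. absv ((s \<circ> ?d) m - (s \<circ> ?d) n) < e"
  proof (intro allI impI)
    fix e :: real assume "e > 0"
    then obtain k where "\<rho> ^ k < e" using rho_pow_small by blast
    hence "\<forall>m\<ge>Suc k. \<forall>n\<ge>Suc k. absv ((s \<circ> ?d) m - (s \<circ> ?d) n) < e"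
      using cau by (auto intro: le_less_trans)
    thus "\<exists>N. \<forall>m\<ge>N. \<forall>n\<ge>N. absv ((s \<circ> ?d) m - (s \<circ> ?d) n) < e" by blast
  qed
  thus ?thesis using unit_ball_cauchy_convergent[of "s \<circ> ?d"] s S.subseq_diagseq by auto
qed

section \<open>Matrices over a local field\<close>

definition entries_le :: "real \<Rightarrow> 'a mat2 \<Rightarrow> bool" where
  "entries_le e M \<longleftrightarrow> (\<forall>i j. absv (M$i$j) \<le> e)"

lemma entries_le_iff: "entries_le e M \<longleftrightarrow> absv (M$1$1) \<le> e \<and> absv (M$1$2) \<le> e \<and> absv (M$2$1) \<le> e \<and> absv (M$2$2) \<le> e"
  unfolding entries_le_def by (auto simp: forall_2)

lemma mdist_set: "{absv (M$i$j - N$i$j) | i j. True} = (\<lambda>(i,j). absv (M$i$j - N$i$j)) ` UNIV"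
  by auto

lemma mdist_le: "mdist absv M N \<le> e \<longleftrightarrow> (\<forall>i j. absv (M$i$j - N$i$j) \<le> e)"
  unfolding mdist_def mdist_set by (subst Max_le_iff) auto

lemma mdist_lt: "mdist absv M N < e \<longleftrightarrow> (\<forall>i j. absv (M$i$j - N$i$j) < e)"
  unfolding mdist_def mdist_set by (subst Max_less_iff) auto

lemma mdist_ge: "absv (M$i$j - N$i$j) \<le> mdist absv M N"
  using mdist_le[of M N "mdist absv M N"] by simp

lemma mdist_nonneg: "mdist absv M N \<ge> 0"
  using mdist_ge[of M 1 1 N] av_nonneg[of "M$1$1 - N$1$1"] by linarith

lemma mdist_sym: "mdist absv M N = mdist absv N M"
  unfolding mdist_def by (metis av_sym)

lemma mdist_entries_le: "mdist absv M N \<le> e \<longleftrightarrow> entries_le e (M - N)"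
  unfolding mdist_le entries_le_def by simp

lemma mdist_ultra: "mdist absv M P \<le> max (mdist absv M N) (mdist absv N P)"
proof -
  have "absv (M$i$j - P$i$j) \<le> max (mdist absv M N) (mdist absv N P)" for i j
  proof -
    have "M$i$j - P$i$j = (M$i$j - N$i$j) + (N$i$j - P$i$j)" by simp
    hence "absv (M$i$j - P$i$j) \<le> max (absv (M$i$j - N$i$j)) (absv (N$i$j - P$i$j))" using av_ultra by metis
    thus ?thesis using mdist_ge[of M i j N] mdist_ge[of N i j P] by linarith
  qed
  thus ?thesis using mdist_le by blast
qed

lemma mdist_trans_lt: "mdist absv M N < e \<Longrightarrow> mdist absv N P < e \<Longrightarrow> mdist absv M P < e"
  using mdist_ultra[of M P N] by simp

lemma entries_le_mono: "entries_le a M \<Longrightarrow> a \<le> b \<Longrightarrow> entries_le b M"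
  unfolding entries_le_def by (meson order_trans)

lemma entries_le_add: "entries_le e M \<Longrightarrow> entries_le e N \<Longrightarrow> entries_le e (M + N)"
  unfolding entries_le_def by (simp add: av_add_le)

lemma entries_le_uminus: "entries_le e (- X) \<longleftrightarrow> entries_le e X" unfolding entries_le_def by simp

lemma entries_le_mult: "entries_le a A \<Longrightarrow> entries_le b B \<Longrightarrow> a \<ge> 0 \<Longrightarrow> entries_le (a * b) (A ** B)"
proof -
  assume A: "entries_le a A" and B: "entries_le b B" and a: "a \<ge> 0"
  have "absv (A$i$k * B$k$j) \<le> a * b" for i j k
    using A B a unfolding entries_le_def by (simp add: av_mult mult_mono')
  thus ?thesis unfolding entries_le_def mult_entry by (simp add: av_add_le)
qed

lemma entries_le_det: "entries_le a A \<Longrightarrow> a \<ge> 0 \<Longrightarrow> absv (det A) \<le> a * a"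
proof -
  assume A: "entries_le a A" and a: "a \<ge> 0"
  have "absv (A$i$k * A$l$j) \<le> a * a" for i j k l
    using A a unfolding entries_le_def by (simp add: av_mult mult_mono')
  thus ?thesis unfolding det_2 by (simp add: av_diff_le)
qed

lemma det_diff_entries_le:
  assumes "entries_le a M" "entries_le a N" "mdist absv M N \<le> e" "a \<ge> 0" "e \<ge> 0"
  shows "absv (det M - det N) \<le> a * e"
proof -
  have d: "entries_le e (M - N)" using assms mdist_entries_le by blast
  have "det M - det N = (M$1$1 - N$1$1) * M$2$2 + N$1$1 * (M$2$2 - N$2$2)
     - ((M$1$2 - N$1$2) * M$2$1 + N$1$2 * (M$2$1 - N$2$1))"
    unfolding det_2 by (simp add: algebra_simps)
  moreover have "absv ((M$i$j - N$i$j) * M$k$l) \<le> a * e" for i j k l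
    using assms d unfolding entries_le_def by (simp add: av_mult mult_mono' mult.commute)
  moreover have "absv (N$i$j * (M$k$l - N$k$l)) \<le> a * e" for i j k l
    using assms d unfolding entries_le_def by (simp add: av_mult mult_mono')
  ultimately show ?thesis by (simp add: av_add_le av_diff_le)
qed

definition mnorm :: "'a mat2 \<Rightarrow> real" where "mnorm M = mdist absv M 0"

lemma entries_le_mnorm: "entries_le (mnorm M) M"
  unfolding entries_le_def mnorm_def using mdist_ge[of M _ _ 0] by simp

lemma mnorm_nonneg: "mnorm M \<ge> 0" unfolding mnorm_def by (rule mdist_nonneg)

lemma mdist_mult_left: "mdist absv (g ** M) (g ** N) \<le> mnorm g * mdist absv M N"
proof -
  have "g ** M - g ** N = g ** (M - N)" by (simp add: mat2_eq mult_entry algebra_simps)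
  moreover have "entries_le (mnorm g * mdist absv M N) (g ** (M - N))"
    using entries_le_mult[of "mnorm g" g "mdist absv M N" "M - N"] entries_le_mnorm[of g] mdist_entries_le[of M N] mnorm_nonneg[of g] by blast
  ultimately show ?thesis using mdist_entries_le by metis
qed


lemma ball_seq_compact:
  fixes s :: "nat \<Rightarrow> 'a"
  assumes s: "\<And>n. absv (s n) \<le> inverse \<rho> ^ k"
  shows "\<exists>l (\<sigma>::nat\<Rightarrow>nat). strict_mono \<sigma> \<and> absv l \<le> inverse \<rho> ^ k \<and> (\<forall>e>0. \<exists>N. \<forall>n\<ge>N. absv (s (\<sigma> n) - l) < e)"
proof -
  have rk: "\<rho> ^ k > 0" using rho_pos by simp
  have "absv (s n * unif ^ k) \<le> 1" for n
  proof -
    have "absv (s n * unif ^ k) = absv (s n) * \<rho> ^ k" by (simp add: av_mult av_power)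
    also have "\<dots> \<le> inverse \<rho> ^ k * \<rho> ^ k" using s rk by (simp add: mult_right_mono)
    also have "\<dots> = 1" using rho_pos by (simp add: power_inverse[symmetric] field_simps)
    finally show ?thesis .
  qed
  then obtain l \<sigma> where l: "strict_mono (\<sigma>::nat\<Rightarrow>nat)" "absv l \<le> 1"
     "\<forall>e>0. \<exists>N. \<forall>n\<ge>N. absv (s (\<sigma> n) * unif ^ k - l) < e"
    using unit_ball_seq_compact[of "\<lambda>n. s n * unif ^ k"] by blast
  have "absv (l / unif ^ k) = absv l / \<rho> ^ k" by (simp add: av_divide av_power)
  also have "\<dots> \<le> 1 / \<rho> ^ k" using l(2) rk by (simp add: divide_right_mono)
  also have "\<dots> = inverse \<rho> ^ k" by (simp add: power_inverse divide_inverse)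
  finally have "absv (l / unif ^ k) \<le> inverse \<rho> ^ k" .
  moreover have "\<forall>e>0. \<exists>N. \<forall>n\<ge>N. absv (s (\<sigma> n) - l / unif ^ k) < e"
  proof (intro allI impI)
    fix e :: real assume "e > 0"
    then obtain N where N: "\<forall>n\<ge>N. absv (s (\<sigma> n) * unif ^ k - l) < e * \<rho> ^ k" using l(3) rk by force
    have "absv (s (\<sigma> n) - l / unif ^ k) < e" if "n \<ge> N" for n
    proof -
      have "s (\<sigma> n) - l / unif ^ k = (s (\<sigma> n) * unif ^ k - l) / unif ^ k" by (simp add: field_simps)
      hence "absv (s (\<sigma> n) - l / unif ^ k) = absv (s (\<sigma> n) * unif ^ k - l) / \<rho> ^ k" by (simp add: av_divide av_power)
      also have "\<dots> < e" using N that rk by (simp add: divide_less_eq)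
      finally show ?thesis .
    qed
    thus "\<exists>N. \<forall>n\<ge>N. absv (s (\<sigma> n) - l / unif ^ k) < e" by blast
  qed
  ultimately show ?thesis using l(1) by blast
qed

lemma ball_seq_compact_finite:
  fixes x :: "nat \<Rightarrow> 'i \<Rightarrow> 'a"
  assumes "finite I" "\<And>n i. i \<in> I \<Longrightarrow> absv (x n i) \<le> inverse \<rho> ^ k"
  shows "\<exists>l (\<sigma>::nat\<Rightarrow>nat). strict_mono \<sigma> \<and> (\<forall>i\<in>I. absv (l i) \<le> inverse \<rho> ^ k) \<and>
            (\<forall>e>0. \<exists>N. \<forall>n\<ge>N. \<forall>i\<in>I. absv (x (\<sigma> n) i - l i) < e)"
  using assms
proof (induction I rule: finite_induct)
  case empty
  show ?case by (rule exI[of _ "\<lambda>i. 0"], rule exI[of _ id]) (simp add: strict_mono_def)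
next
  case (insert a I)
  obtain l \<sigma> where l: "strict_mono (\<sigma>::nat\<Rightarrow>nat)" "\<forall>i\<in>I. absv (l i) \<le> inverse \<rho> ^ k"
     "\<forall>e>0. \<exists>N. \<forall>n\<ge>N. \<forall>i\<in>I. absv (x (\<sigma> n) i - l i) < e" using insert by force
  obtain la \<tau> where t: "strict_mono (\<tau>::nat\<Rightarrow>nat)" "absv la \<le> inverse \<rho> ^ k"
     "\<forall>e>0. \<exists>N. \<forall>n\<ge>N. absv (x (\<sigma> (\<tau> n)) a - la) < e"
    using ball_seq_compact[of "\<lambda>n. x (\<sigma> n) a" k] insert.prems by force
  define l' where "l' = l(a := la)"
  have "strict_mono (\<sigma> \<circ> \<tau>)" using l(1) t(1) by (simp add: strict_mono_def)
  moreover have "\<forall>i\<in>insert a I. absv (l' i) \<le> inverse \<rho> ^ k" using l(2) t(2) l'_def by auto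
  moreover have "\<forall>e>0. \<exists>N. \<forall>n\<ge>N. \<forall>i\<in>insert a I. absv (x ((\<sigma> \<circ> \<tau>) n) i - l' i) < e"
  proof (intro allI impI)
    fix e :: real assume e: "e > 0"
    obtain N1 where N1: "\<forall>n\<ge>N1. \<forall>i\<in>I. absv (x (\<sigma> n) i - l i) < e" using l(3) e by blast
    obtain N2 where N2: "\<forall>n\<ge>N2. absv (x (\<sigma> (\<tau> n)) a - la) < e" using t(3) e by blast
    have "\<forall>i\<in>insert a I. absv (x ((\<sigma> \<circ> \<tau>) n) i - l' i) < e" if "n \<ge> max N1 N2" for n
    proof
      fix i assume i: "i \<in> insert a I"
      show "absv (x ((\<sigma> \<circ> \<tau>) n) i - l' i) < e"
      proof (cases "i = a")
        case True thus ?thesis using N2 that l'_def by simp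
      next
        case False
        hence "i \<in> I" using i by simp
        moreover have "\<tau> n \<ge> N1" using seq_suble[OF t(1), of n] that by simp
        ultimately show ?thesis using N1 False l'_def by simp
      qed
    qed
    thus "\<exists>N. \<forall>n\<ge>N. \<forall>i\<in>insert a I. absv (x ((\<sigma> \<circ> \<tau>) n) i - l' i) < e" by blast
  qed
  ultimately show ?case by blast
qed

lemma mat_ball_seq_compact:
  assumes "\<And>n. entries_le (inverse \<rho> ^ k) (A n)"
  shows "\<exists>L (\<sigma>::nat\<Rightarrow>nat). strict_mono \<sigma> \<and> entries_le (inverse \<rho> ^ k) L \<and> (\<forall>e>0. \<exists>N. \<forall>n\<ge>N. mdist absv (A (\<sigma> n)) L < e)"
proof -
  obtain l \<sigma> where l: "strict_mono (\<sigma>::nat\<Rightarrow>nat)" "\<forall>i\<in>UNIV. absv (l i) \<le> inverse \<rho> ^ k"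
     "\<forall>e>0. \<exists>N. \<forall>n\<ge>N. \<forall>i\<in>UNIV. absv ((\<lambda>n (i,j). A n $ i $ j) (\<sigma> n) i - l i) < e"
    using ball_seq_compact_finite[of "UNIV :: (2 \<times> 2) set" "\<lambda>n (i,j). A n $ i $ j" k] assms unfolding entries_le_def by force
  define L :: "'a mat2" where "L = (\<chi> i j. l (i,j))"
  have "entries_le (inverse \<rho> ^ k) L" using l(2) unfolding entries_le_def L_def by simp
  moreover have "\<forall>e>0. \<exists>N. \<forall>n\<ge>N. mdist absv (A (\<sigma> n)) L < e"
    using l(3) unfolding mdist_lt L_def by fastforce
  ultimately show ?thesis using l(1) by blast
qed

lemma entries_le_limit:
  fixes A :: "nat \<Rightarrow> 'a mat2"
  assumes "\<And>n. entries_le c (A n)" "\<forall>e>0. \<exists>N. \<forall>n\<ge>N. mdist absv (A n) L < e"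
  shows "entries_le c L"
  unfolding entries_le_def
proof (intro allI, rule ccontr)
  fix i j assume "\<not> absv (L$i$j) \<le> c"
  have "c \<ge> 0" using assms(1)[of 0] av_nonneg[of "A 0 $ i $ j"] unfolding entries_le_def by (meson order_trans)
  hence "absv (L$i$j) > 0" using \<open>\<not> absv (L$i$j) \<le> c\<close> by linarith
  then obtain N where "\<forall>n\<ge>N. mdist absv (A n) L < absv (L$i$j)" using assms(2) by blast
  hence "absv (A N $ i $ j - L$i$j) < absv (L$i$j)" using mdist_ge[of "A N" i j L] by fastforce
  hence "absv (A N $ i $ j) = absv (L$i$j)" by (rule av_close_eq)
  moreover have "absv (A N $ i $ j) \<le> c" using assms(1)[of N] unfolding entries_le_def by blast
  ultimately show False using \<open>\<not> absv (L$i$j) \<le> c\<close> by simp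
qed

lemma entries_le_close:
  assumes "entries_le c M" "mdist absv N M \<le> c" shows "entries_le c N"
proof -
  have "absv (N$i$j) \<le> c" for i j
  proof -
    have "N$i$j = (N$i$j - M$i$j) + M$i$j" by simp
    moreover have "absv (N$i$j - M$i$j) \<le> c" using mdist_ge[of N i j M] assms(2) by linarith
    moreover have "absv (M$i$j) \<le> c" using assms(1) unfolding entries_le_def by blast
    ultimately show ?thesis using av_add_le by metis
  qed
  thus ?thesis unfolding entries_le_def by blast
qed

lemma abs_det_locally_const:
  assumes "det L \<noteq> 0"
  shows "\<exists>\<delta>>0. \<forall>N. mdist absv N L < \<delta> \<longrightarrow> absv (det N) = absv (det L)"
proof -
  define a where "a = max (mnorm L) 1"
  have a: "a \<ge> 1" "entries_le a L" using entries_le_mnorm[of L] entries_le_mono a_def by auto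
  define \<delta> where "\<delta> = min 1 (absv (det L) / a)"
  have dpos: "\<delta> > 0" using assms a unfolding \<delta>_def by simp
  have "absv (det N) = absv (det L)" if N: "mdist absv N L < \<delta>" for N
  proof -
    have "mdist absv N L \<le> a" using N a unfolding \<delta>_def by linarith
    hence bN: "entries_le a N" using entries_le_close a by blast
    have "absv (det N - det L) \<le> a * mdist absv N L"
      using det_diff_entries_le[OF bN a(2) order_refl] a mdist_nonneg by simp
    also have "\<dots> < absv (det L)" using N a unfolding \<delta>_def by (simp add: pos_less_divide_eq mult.commute)
    finally show ?thesis by (rule av_close_eq)
  qed
  thus ?thesis using dpos by blast
qed

lemma abs_det_ge_limit:
  fixes A :: "nat \<Rightarrow> 'a mat2"
  assumes "\<And>n. entries_le c (A n)" "\<And>n. absv (det (A n)) \<ge> d" "d > 0" "c \<ge> 0"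
    "\<forall>e>0. \<exists>N. \<forall>n\<ge>N. mdist absv (A n) L < e"
  shows "absv (det L) \<ge> d"
proof (rule ccontr)
  assume "\<not> absv (det L) \<ge> d"
  have bL: "entries_le c L" using entries_le_limit assms by blast
  have cpos: "c > 0"
  proof (rule ccontr)
    assume "\<not> c > 0" hence "c = 0" using assms by simp
    hence "\<forall>i j. A 0 $ i $ j = 0" using assms(1)[of 0] unfolding entries_le_def by (metis av_nonneg av_zero_iff order_antisym)
    hence "A 0 = 0" by (simp add: vec_eq_iff)
    thus False using assms(2)[of 0] assms(3) by (simp add: det_2)
  qed
  obtain N where N: "\<forall>n\<ge>N. mdist absv (A n) L < d / c" using assms(5) assms(3) cpos by force
  have "absv (det (A N) - det L) \<le> c * mdist absv (A N) L"
    using det_diff_entries_le[OF assms(1)[of N] bL order_refl] assms mdist_nonneg by simp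
  also have "\<dots> < d" using N[rule_format, of N] cpos by (simp add: pos_less_divide_eq mult.commute)
  finally have "absv (det (A N) - det L) < d" .
  hence "absv (det (A N)) < d" using \<open>\<not> absv (det L) \<ge> d\<close> av_ultra[of "det (A N) - det L" "det L"] by simp
  thus False using assms(2)[of N] by simp
qed

lemma compact_M_ball: "compact_M absv {M. entries_le (inverse \<rho> ^ k) M}"
  unfolding compact_M_def
proof (intro allI impI)
  fix A :: "nat \<Rightarrow> 'a mat2" assume "\<forall>n. A n \<in> {M. entries_le (inverse \<rho> ^ k) M}"
  then obtain L \<sigma> where L: "strict_mono (\<sigma>::nat\<Rightarrow>nat)" "entries_le (inverse \<rho> ^ k) L"
    "\<forall>e>0. \<exists>N. \<forall>n\<ge>N. mdist absv (A (\<sigma> n)) L < e" using mat_ball_seq_compact[of k A] by auto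
  thus "\<exists>l\<in>{M. entries_le (inverse \<rho> ^ k) M}. \<exists>r::nat\<Rightarrow>nat. strict_mono r \<and> (\<forall>e>0. \<exists>N. \<forall>n\<ge>N. mdist absv (A (r n)) l < e)"
    by blast
qed

lemma compact_M_ball_det_ge: "d > 0 \<Longrightarrow> compact_M absv {M. entries_le (inverse \<rho> ^ k) M \<and> absv (det M) \<ge> d}"
  unfolding compact_M_def
proof (intro allI impI)
  fix A :: "nat \<Rightarrow> 'a mat2" assume d: "d > 0" and A: "\<forall>n. A n \<in> {M. entries_le (inverse \<rho> ^ k) M \<and> absv (det M) \<ge> d}"
  then obtain L \<sigma> where L: "strict_mono (\<sigma>::nat\<Rightarrow>nat)" "entries_le (inverse \<rho> ^ k) L"
    "\<forall>e>0. \<exists>N. \<forall>n\<ge>N. mdist absv (A (\<sigma> n)) L < e" using mat_ball_seq_compact[of k A] by auto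
  have "absv (det L) \<ge> d"
    by (rule abs_det_ge_limit[of "inverse \<rho> ^ k" "A \<circ> \<sigma>"]) (use A L d rho_pos in auto)
  thus "\<exists>l\<in>{M. entries_le (inverse \<rho> ^ k) M \<and> absv (det M) \<ge> d}. \<exists>r::nat\<Rightarrow>nat. strict_mono r \<and> (\<forall>e>0. \<exists>N. \<forall>n\<ge>N. mdist absv (A (r n)) l < e)"
    using L by blast
qed

section \<open>Schwartz functions as step functions\<close>

definition step_fun :: "nat \<Rightarrow> nat \<Rightarrow> ('a mat2 \<Rightarrow> complex) \<Rightarrow> bool" where
  "step_fun r s f \<longleftrightarrow> (\<forall>M N. mdist absv M N \<le> \<rho> ^ r \<longrightarrow> f M = f N) \<and>
                   (\<forall>M. f M \<noteq> 0 \<longrightarrow> entries_le (inverse \<rho> ^ s) M)"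

lemma compact_M_entries_le:
  assumes "compact_M absv K"
  shows "\<exists>k. \<forall>M\<in>K. entries_le (inverse \<rho> ^ k) M"
proof (rule ccontr)
  assume "\<not> ?thesis"
  hence "\<forall>k. \<exists>M. M \<in> K \<and> \<not> entries_le (inverse \<rho> ^ k) M" by blast
  hence "\<exists>A. \<forall>k. A k \<in> K \<and> \<not> entries_le (inverse \<rho> ^ k) (A k)" by (rule choice)
  then obtain A where A: "\<And>k. A k \<in> K \<and> \<not> entries_le (inverse \<rho> ^ k) (A k)" by blast
  have "\<exists>l\<in>K. \<exists>r::nat\<Rightarrow>nat. strict_mono r \<and> (\<forall>e>0. \<exists>N. \<forall>n\<ge>N. mdist absv (A (r n)) l < e)"
    using assms[unfolded compact_M_def, rule_format, of A] A by blast
  then obtain L \<sigma> where L: "L \<in> K" "strict_mono (\<sigma>::nat\<Rightarrow>nat)" "\<forall>e>0. \<exists>N. \<forall>n\<ge>N. mdist absv (A (\<sigma> n)) L < e"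
    by blast
  obtain N where N: "\<forall>n\<ge>N. mdist absv (A (\<sigma> n)) L < 1" using L(3) by force
  define a where "a = max (mnorm L) 1"
  have a: "a \<ge> 1" "entries_le a L" using entries_le_mnorm[of L] entries_le_mono a_def by auto
  obtain k0 where k0: "a \<le> inverse \<rho> ^ k0" using inverse_rho_pow_ge by blast
  define n where "n = max N k0"
  have "mdist absv (A (\<sigma> n)) L < 1" using N n_def by simp
  hence "mdist absv (A (\<sigma> n)) L \<le> a" using a by linarith
  hence "entries_le a (A (\<sigma> n))" using entries_le_close a by blast
  moreover have "\<sigma> n \<ge> k0" using seq_suble[OF L(2), of n] n_def by simp
  hence "a \<le> inverse \<rho> ^ (\<sigma> n)" using k0 inverse_rho_pow_mono[of k0 "\<sigma> n"] by linarith
  ultimately have "entries_le (inverse \<rho> ^ (\<sigma> n)) (A (\<sigma> n))" using entries_le_mono by blast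
  thus False using A by blast
qed

lemma GL2_open: "L \<in> GL2 \<Longrightarrow> \<exists>\<delta>>0. \<forall>N. mdist absv N L < \<delta> \<longrightarrow> N \<in> GL2"
proof -
  assume "L \<in> GL2"
  hence "det L \<noteq> 0" unfolding GL2_def by simp
  then obtain d where "d > 0" "\<forall>N. mdist absv N L < d \<longrightarrow> absv (det N) = absv (det L)" using abs_det_locally_const by blast
  moreover have "absv (det L) \<noteq> 0" using \<open>det L \<noteq> 0\<close> by simp
  ultimately show ?thesis unfolding GL2_def by (intro exI[of _ d]) auto
qed

text \<open>Local constancy is uniform on the compact support: otherwise pairs of ever closer points with
  different values would accumulate at a point of the support near which \<open>f\<close> is constant.\<close>
lemma Sch_uniformly_locally_constant:
  assumes f: "f \<in> Sch absv X" and X_open: "\<forall>L\<in>X. \<exists>\<delta>>0. \<forall>N. mdist absv N L < \<delta> \<longrightarrow> N \<in> X"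
  shows "\<exists>r. \<forall>M N. mdist absv M N \<le> \<rho> ^ r \<longrightarrow> f M = f N"
proof (rule ccontr)
  obtain K where K: "K \<subseteq> X" "compact_M absv K" "{M\<in>X. f M \<noteq> 0} \<subseteq> K"
    using f unfolding Sch_def by blast
  have inK: "f M \<noteq> 0 \<Longrightarrow> M \<in> K" for M using f K(3) unfolding Sch_def by blast
  have lc: "\<forall>M\<in>X. \<exists>r>0. \<forall>N\<in>X. mdist absv N M < r \<longrightarrow> f N = f M" using f unfolding Sch_def by blast
  assume "\<not> ?thesis"
  hence "\<forall>r. \<exists>A B. mdist absv A B \<le> \<rho> ^ r \<and> f A \<noteq> f B \<and> f A \<noteq> 0"
    by (metis mdist_sym)
  then obtain A B where AB: "\<And>r. mdist absv (A r) (B r) \<le> \<rho> ^ r \<and> f (A r) \<noteq> f (B r) \<and> f (A r) \<noteq> 0"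
    by metis
  have "\<exists>l\<in>K. \<exists>r::nat\<Rightarrow>nat. strict_mono r \<and> (\<forall>e>0. \<exists>N. \<forall>n\<ge>N. mdist absv (A (r n)) l < e)"
    using K(2)[unfolded compact_M_def, rule_format, of A] AB inK by blast
  then obtain L \<sigma> where L: "L \<in> K" "strict_mono (\<sigma>::nat\<Rightarrow>nat)" "\<forall>e>0. \<exists>N. \<forall>n\<ge>N. mdist absv (A (\<sigma> n)) L < e"
    by blast
  have LX: "L \<in> X" using L K by blast
  obtain d1 where d1: "d1 > 0" "\<forall>N\<in>X. mdist absv N L < d1 \<longrightarrow> f N = f L" using lc LX by blast
  obtain d2 where d2: "d2 > 0" "\<forall>N. mdist absv N L < d2 \<longrightarrow> N \<in> X" using X_open LX by blast
  define d where "d = min d1 d2"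
  have d: "d > 0" using d1 d2 d_def by simp
  obtain N where N: "\<forall>n\<ge>N. mdist absv (A (\<sigma> n)) L < d" using L(3) d by blast
  obtain j0 where j0: "\<rho> ^ j0 < d" using rho_pow_small d by blast
  define n where "n = max N j0"
  have "\<sigma> n \<ge> j0" using seq_suble[OF L(2), of n] n_def by simp
  hence "\<rho> ^ (\<sigma> n) < d" using j0 rho_pow_antimono[of j0 "\<sigma> n"] by linarith
  hence "mdist absv (B (\<sigma> n)) (A (\<sigma> n)) < d" using AB[of "\<sigma> n"] mdist_sym[of "B (\<sigma> n)" "A (\<sigma> n)"] by linarith
  moreover have "mdist absv (A (\<sigma> n)) L < d" using N n_def by simp
  ultimately have "mdist absv (B (\<sigma> n)) L < d" by (rule mdist_trans_lt)
  hence "f (B (\<sigma> n)) = f L" using d1 d2 d_def by auto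
  moreover have "f (A (\<sigma> n)) = f L" using \<open>mdist absv (A (\<sigma> n)) L < d\<close> d1 d2 d_def by auto
  ultimately show False using AB[of "\<sigma> n"] by simp
qed

lemma Sch_step_fun:
  assumes f: "f \<in> Sch absv X" and X_open: "\<forall>L\<in>X. \<exists>\<delta>>0. \<forall>N. mdist absv N L < \<delta> \<longrightarrow> N \<in> X"
  shows "\<exists>r s. step_fun r s f"
proof -
  obtain K where K: "compact_M absv K" "{M\<in>X. f M \<noteq> 0} \<subseteq> K"
    using f unfolding Sch_def by blast
  hence "\<forall>M. f M \<noteq> 0 \<longrightarrow> M \<in> K" using f unfolding Sch_def by blast
  moreover obtain s where "\<forall>M\<in>K. entries_le (inverse \<rho> ^ s) M" using compact_M_entries_le[OF K(1)] by blast
  moreover obtain r where "\<forall>M N. mdist absv M N \<le> \<rho> ^ r \<longrightarrow> f M = f N"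
    using Sch_uniformly_locally_constant[OF assms] by blast
  ultimately show ?thesis unfolding step_fun_def by blast
qed

lemma Sch_UNIV_step_fun: "f \<in> Sch absv UNIV \<Longrightarrow> \<exists>r s. step_fun r s f"
  by (rule Sch_step_fun) (auto intro: exI[of _ 1])

lemma Sch_GL2_step_fun: "f \<in> Sch absv GL2 \<Longrightarrow> \<exists>r s. step_fun r s f"
  by (rule Sch_step_fun) (use GL2_open in auto)

lemma Sch_GL2_det_bounded_below:
  assumes f: "f \<in> Sch absv GL2"
  shows "\<exists>c>0. \<forall>M. f M \<noteq> 0 \<longrightarrow> absv (det M) \<ge> c"
proof (rule ccontr)
  assume neg: "\<not> ?thesis"
  obtain K where K: "K \<subseteq> GL2" "compact_M absv K" "{M\<in>GL2. f M \<noteq> 0} \<subseteq> K"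
    using f unfolding Sch_def by blast
  have off: "\<And>M. M \<notin> GL2 \<Longrightarrow> f M = 0" using f unfolding Sch_def by blast
  have "\<forall>n. \<exists>M. f M \<noteq> 0 \<and> absv (det M) < \<rho> ^ n"
  proof
    fix n :: nat
    have "\<rho> ^ n > 0" using rho_pos by simp
    thus "\<exists>M. f M \<noteq> 0 \<and> absv (det M) < \<rho> ^ n" using neg by (auto simp: not_le)
  qed
  hence "\<exists>A. \<forall>n. f (A n) \<noteq> 0 \<and> absv (det (A n)) < \<rho> ^ n" by (rule choice)
  then obtain A where A: "\<And>n. f (A n) \<noteq> 0 \<and> absv (det (A n)) < \<rho> ^ n" by blast
  have "A n \<in> K" for n using A off K(3) by blast
  hence "\<exists>l\<in>K. \<exists>r::nat\<Rightarrow>nat. strict_mono r \<and> (\<forall>e>0. \<exists>N. \<forall>n\<ge>N. mdist absv (A (r n)) l < e)"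
    using K(2)[unfolded compact_M_def, rule_format, of A] by blast
  then obtain L \<sigma> where L: "L \<in> K" "strict_mono (\<sigma>::nat\<Rightarrow>nat)" "\<forall>e>0. \<exists>N. \<forall>n\<ge>N. mdist absv (A (\<sigma> n)) L < e"
    by blast
  have "det L \<noteq> 0" using L K unfolding GL2_def by blast
  then obtain d where d: "d > 0" "\<forall>N. mdist absv N L < d \<longrightarrow> absv (det N) = absv (det L)"
    using abs_det_locally_const by blast
  obtain N where N: "\<forall>n\<ge>N. mdist absv (A (\<sigma> n)) L < d" using L(3) d by blast
  have "absv (det L) > 0" using \<open>det L \<noteq> 0\<close> by simp
  then obtain j0 where j0: "\<rho> ^ j0 < absv (det L)" using rho_pow_small by blast
  define n where "n = max N j0"
  have "\<sigma> n \<ge> j0" using seq_suble[OF L(2), of n] n_def by simp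
  hence "\<rho> ^ (\<sigma> n) < absv (det L)" using j0 rho_pow_antimono[of j0 "\<sigma> n"] by linarith
  moreover have "absv (det (A (\<sigma> n))) = absv (det L)" using N d n_def by simp
  ultimately show False using A[of "\<sigma> n"] by simp
qed

lemma step_fun_Sch_UNIV: "step_fun r s f \<Longrightarrow> f \<in> Sch absv UNIV"
  unfolding Sch_def
proof (intro CollectI conjI)
  assume n: "step_fun r s f"
  show "\<forall>M. M \<notin> UNIV \<longrightarrow> f M = 0" by simp
  show "\<forall>M\<in>UNIV. \<exists>ra>0. \<forall>N\<in>UNIV. mdist absv N M < ra \<longrightarrow> f N = f M"
    using n rho_pos unfolding step_fun_def by (intro ballI exI[of _ "\<rho> ^ r"]) auto
  show "\<exists>K\<subseteq>UNIV. compact_M absv K \<and> {M \<in> UNIV. f M \<noteq> 0} \<subseteq> K"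
    using n compact_M_ball[of s] unfolding step_fun_def by (intro exI[of _ "{M. entries_le (inverse \<rho> ^ s) M}"]) auto
qed

lemma step_fun_Sch_GL2: "step_fun r s f \<Longrightarrow> c > 0 \<Longrightarrow> (\<And>M. f M \<noteq> 0 \<Longrightarrow> absv (det M) \<ge> c) \<Longrightarrow> f \<in> Sch absv GL2"
  unfolding Sch_def
proof (intro CollectI conjI)
  assume n: "step_fun r s f" and c: "c > 0" and dc: "\<And>M. f M \<noteq> 0 \<Longrightarrow> absv (det M) \<ge> c"
  show "\<forall>M. M \<notin> GL2 \<longrightarrow> f M = 0" using dc c unfolding GL2_def by fastforce
  show "\<forall>M\<in>GL2. \<exists>ra>0. \<forall>N\<in>GL2. mdist absv N M < ra \<longrightarrow> f N = f M"
    using n rho_pos unfolding step_fun_def by (intro ballI exI[of _ "\<rho> ^ r"]) auto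
  have "{M. entries_le (inverse \<rho> ^ s) M \<and> absv (det M) \<ge> c} \<subseteq> GL2" using c unfolding GL2_def by auto
  moreover have "{M \<in> GL2. f M \<noteq> 0} \<subseteq> {M. entries_le (inverse \<rho> ^ s) M \<and> absv (det M) \<ge> c}"
    using n dc unfolding step_fun_def by auto
  ultimately show "\<exists>K\<subseteq>GL2. compact_M absv K \<and> {M \<in> GL2. f M \<noteq> 0} \<subseteq> K"
    using compact_M_ball_det_ge[OF c, of s] by blast
qed

lemma step_fun_translate:
  assumes n: "step_fun r s f" and g: "det g \<noteq> 0"
  shows "\<exists>r' s'. step_fun r' s' (\<lambda>M. f (g ** M))"
proof -
  have np: "mnorm g + 1 > 0" using mnorm_nonneg[of g] by linarith
  obtain r' where r': "\<rho> ^ r' < \<rho> ^ r / (mnorm g + 1)" using rho_pow_small[of "\<rho> ^ r / (mnorm g + 1)"] rho_pos np by auto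
  obtain s' where s': "mnorm (inv2 g) * inverse \<rho> ^ s \<le> inverse \<rho> ^ s'" using inverse_rho_pow_ge by blast
  have "f (g ** M) = f (g ** N)" if "mdist absv M N \<le> \<rho> ^ r'" for M N
  proof -
    have "mdist absv (g ** M) (g ** N) \<le> mnorm g * mdist absv M N" by (rule mdist_mult_left)
    also have "\<dots> \<le> (mnorm g + 1) * \<rho> ^ r'" using that mnorm_nonneg[of g] mdist_nonneg[of M N]
      by (intro mult_mono) auto
    also have "\<dots> \<le> \<rho> ^ r" using r' np by (simp add: pos_less_divide_eq mult.commute)
    finally show ?thesis using n unfolding step_fun_def by blast
  qed
  moreover have "entries_le (inverse \<rho> ^ s') M" if "f (g ** M) \<noteq> 0" for M
  proof -
    have "entries_le (inverse \<rho> ^ s) (g ** M)" using n that unfolding step_fun_def by blast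
    hence "entries_le (mnorm (inv2 g) * inverse \<rho> ^ s) (inv2 g ** (g ** M))"
      using entries_le_mult[OF entries_le_mnorm] mnorm_nonneg by blast
    thus ?thesis using inv2_cancel[OF g, of M] s' entries_le_mono by simp
  qed
  ultimately show ?thesis unfolding step_fun_def by blast
qed

section \<open>Congruence subgroups and Hermite normal forms\<close>

definition GL2_O :: "'a mat2 set" where "GL2_O = {k. entries_le 1 k \<and> absv (det k) = 1}"
definition congr_subgroup :: "nat \<Rightarrow> 'a mat2 set" where "congr_subgroup r = {k. entries_le 1 k \<and> entries_le (\<rho> ^ r) (k - mat 1)}"

lemma entries_le_1_mat_1: "entries_le 1 (mat 1 :: 'a mat2)" by (simp add: entries_le_iff)

lemma GL2_O_det: "k \<in> GL2_O \<Longrightarrow> det k \<noteq> 0"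
  unfolding GL2_O_def by auto

lemma GL2_O_mult: "k \<in> GL2_O \<Longrightarrow> w \<in> GL2_O \<Longrightarrow> k ** w \<in> GL2_O"
  unfolding GL2_O_def using entries_le_mult[of 1 k 1 w] by (simp add: det_mul av_mult)

lemma entries_le_inv2: "entries_le 1 k \<Longrightarrow> absv (det k) = 1 \<Longrightarrow> entries_le 1 (inv2 k)"
  unfolding entries_le_iff inv2_def by (simp add: av_divide)

lemma GL2_O_inv: "k \<in> GL2_O \<Longrightarrow> inv2 k \<in> GL2_O"
proof -
  assume k: "k \<in> GL2_O"
  hence "det k \<noteq> 0" by (rule GL2_O_det)
  thus ?thesis using k unfolding GL2_O_def using entries_le_inv2 det_inv2[OF \<open>det k \<noteq> 0\<close>] by (simp add: av_inverse)
qed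

lemma congr_subgroup_det:
  assumes "r \<ge> 1" "k \<in> congr_subgroup r"
  shows "absv (det k) = 1"
proof -
  have "absv (det k - det (mat 1 :: 'a mat2)) \<le> 1 * \<rho> ^ r"
    using det_diff_entries_le[of 1 k "mat 1" "\<rho> ^ r"] assms entries_le_1_mat_1 mdist_entries_le rho_pos unfolding congr_subgroup_def by simp
  moreover have "\<rho> ^ r < 1" using assms rho_pos rho_lt1 by (simp add: power_less_one_iff)
  ultimately have "absv (det k - 1) < absv 1" by (simp add: det_2)
  hence "absv (det k) = absv 1" by (rule av_close_eq)
  thus ?thesis by simp
qed

lemma congr_subgroup_GL2_O: "r \<ge> 1 \<Longrightarrow> k \<in> congr_subgroup r \<Longrightarrow> k \<in> GL2_O"
  using congr_subgroup_det unfolding GL2_O_def congr_subgroup_def by auto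

lemma congr_subgroup_mult:
  assumes "k \<in> congr_subgroup r" "w \<in> congr_subgroup r"
  shows "k ** w \<in> congr_subgroup r"
proof -
  have eq: "k ** w - mat 1 = (k - mat 1) ** w + (w - mat 1)"
    by (simp add: mat2_eq mult_entry algebra_simps)
  have "entries_le (\<rho> ^ r * 1) ((k - mat 1) ** w)" using assms unfolding congr_subgroup_def
    by (intro entries_le_mult) (auto simp: rho_pos less_imp_le)
  hence "entries_le (\<rho> ^ r) ((k - mat 1) ** w + (w - mat 1))" using assms unfolding congr_subgroup_def by (simp add: entries_le_add)
  hence "entries_le (\<rho> ^ r) (k ** w - mat 1)" by (simp only: eq)
  thus ?thesis using assms entries_le_mult[of 1 k 1 w] unfolding congr_subgroup_def by simp
qed

lemma congr_subgroup_inv: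
  assumes "r \<ge> 1" "k \<in> congr_subgroup r"
  shows "inv2 k \<in> congr_subgroup r"
proof -
  have d: "absv (det k) = 1" using congr_subgroup_det assms by blast
  hence dn: "det k \<noteq> 0" by auto
  have b: "entries_le 1 (inv2 k)" using entries_le_inv2 d assms unfolding congr_subgroup_def by blast
  have "inv2 k - mat 1 = inv2 k ** (mat 1 - k)"
    using inv2_left[OF dn] by (simp add: matrix_diff_ldistrib)
  moreover have "entries_le (1 * \<rho> ^ r) (inv2 k ** (mat 1 - k))"
  proof (rule entries_le_mult[OF b])
    have "mat 1 - k = - (k - mat 1)" by simp
    thus "entries_le (\<rho> ^ r) (mat 1 - k)" using assms entries_le_uminus[of "\<rho> ^ r" "k - mat 1"] unfolding congr_subgroup_def by simp
  qed simp
  ultimately show ?thesis using b unfolding congr_subgroup_def by simp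
qed

definition congr_reps :: "nat \<Rightarrow> 'a mat2 set" where
  "congr_reps r = {k \<in> GL2_O. \<forall>i j. k$i$j \<in> reps_mod r}"

lemma congr_reps_finite: "finite (congr_reps r)"
proof -
  have "congr_reps r \<subseteq> (\<lambda>(a,b,c,d). matrix2 a b c d) ` (reps_mod r \<times> reps_mod r \<times> reps_mod r \<times> reps_mod r)"
  proof
    fix k assume "k \<in> congr_reps r"
    hence "k = matrix2 (k$1$1) (k$1$2) (k$2$1) (k$2$2)" "k$1$1 \<in> reps_mod r" "k$1$2 \<in> reps_mod r" "k$2$1 \<in> reps_mod r" "k$2$2 \<in> reps_mod r"
      unfolding congr_reps_def by (auto simp: mat2_eq)
    thus "k \<in> (\<lambda>(a,b,c,d). matrix2 a b c d) ` (reps_mod r \<times> reps_mod r \<times> reps_mod r \<times> reps_mod r)" by (auto simp: image_iff)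
  qed
  moreover have "finite (reps_mod r \<times> reps_mod r \<times> reps_mod r \<times> reps_mod r)" using reps_mod_finite by simp
  ultimately show ?thesis using finite_subset by blast
qed

lemma congr_reps_ex:
  assumes "r \<ge> 1" "k' \<in> GL2_O"
  shows "\<exists>k\<in>congr_reps r. inv2 k ** k' \<in> congr_subgroup r"
proof -
  have "\<forall>i j. \<exists>c. c \<in> reps_mod r \<and> absv (k'$i$j - c) \<le> \<rho> ^ r"
    using reps_mod_ex assms unfolding GL2_O_def entries_le_def by blast
  hence "\<forall>i. \<exists>Ci. \<forall>j. Ci j \<in> reps_mod r \<and> absv (k'$i$j - Ci j) \<le> \<rho> ^ r" by (intro allI choice) blast
  hence "\<exists>C. \<forall>i j. C i j \<in> reps_mod r \<and> absv (k'$i$j - C i j) \<le> \<rho> ^ r" by (rule choice)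
  then obtain C where C: "\<And>i j. C i j \<in> reps_mod r \<and> absv (k'$i$j - C i j) \<le> \<rho> ^ r" by blast
  define k :: "'a mat2" where "k = (\<chi> i j. C i j)"
  have "\<forall>i j. absv (C i j) \<le> 1" using C reps_mod_O by blast
  hence bk: "entries_le 1 k" unfolding k_def entries_le_def by simp
  have kk: "entries_le (\<rho> ^ r) (k' - k)" using C unfolding k_def entries_le_def by simp
  have "absv (det k' - det k) \<le> 1 * \<rho> ^ r"
    using det_diff_entries_le[of 1 k' k "\<rho> ^ r"] assms bk kk mdist_entries_le rho_pos unfolding GL2_O_def by simp
  moreover have "\<rho> ^ r < 1" using assms rho_pos rho_lt1 by (simp add: power_less_one_iff)
  ultimately have "absv (det k - det k') < absv (det k')" using assms unfolding GL2_O_def by (simp add: av_sym)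
  hence "absv (det k) = absv (det k')" by (rule av_close_eq)
  hence dk: "absv (det k) = 1" using assms unfolding GL2_O_def by simp
  hence kR: "k \<in> congr_reps r" using bk C unfolding congr_reps_def GL2_O_def k_def by simp
  have dn: "det k \<noteq> 0" using dk by auto
  have bi: "entries_le 1 (inv2 k)" using entries_le_inv2 bk dk by blast
  have "inv2 k ** k' - mat 1 = inv2 k ** (k' - k)"
    using inv2_left[OF dn] by (simp add: matrix_diff_ldistrib)
  moreover have "entries_le (1 * \<rho> ^ r) (inv2 k ** (k' - k))" using entries_le_mult[OF bi kk] by simp
  moreover have "entries_le 1 (inv2 k ** k')" using entries_le_mult[OF bi, of 1 k'] assms unfolding GL2_O_def by simp
  ultimately have "inv2 k ** k' \<in> congr_subgroup r" unfolding congr_subgroup_def by simp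
  thus ?thesis using kR by blast
qed

lemma congr_reps_uniq:
  assumes "k \<in> congr_reps r" "k' \<in> congr_reps r" "inv2 k' ** k \<in> congr_subgroup r"
  shows "k = k'"
proof -
  have dk': "det k' \<noteq> 0" using assms GL2_O_det unfolding congr_reps_def by blast
  have "k - k' = k' ** (inv2 k' ** k - mat 1)"
    using inv2_right[OF dk'] by (simp add: matrix_diff_ldistrib matrix_mul_assoc)
  moreover have "entries_le (1 * \<rho> ^ r) (k' ** (inv2 k' ** k - mat 1))"
    using assms entries_le_mult[of 1 k' "\<rho> ^ r"] unfolding congr_reps_def GL2_O_def congr_subgroup_def by simp
  ultimately have "entries_le (\<rho> ^ r) (k - k')" by simp
  have "k$i$j = k'$i$j" for i j
  proof -
    have "absv (k$i$j - k'$i$j) \<le> \<rho> ^ r" using \<open>entries_le (\<rho> ^ r) (k - k')\<close> unfolding entries_le_def by simp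
    moreover have "k$i$j \<in> reps_mod r" "k'$i$j \<in> reps_mod r" using assms unfolding congr_reps_def by auto
    ultimately show ?thesis using reps_mod_uniq by blast
  qed
  thus ?thesis by (simp add: vec_eq_iff)
qed

text \<open>Hermite normal forms for the right action of \<open>GL\<^sub>2(O)\<close> on integral matrices with \<open>|det| = \<rho>\<^sup>n\<close>.\<close>
definition hermite :: "nat \<Rightarrow> nat \<Rightarrow> 'a \<Rightarrow> 'a mat2" where
  "hermite n a c = matrix2 (unif ^ a) 0 c (unif ^ (n - a))"

lemma hermite_entries_le: "c \<in> reps_mod b \<Longrightarrow> entries_le 1 (hermite n a c)"
  unfolding hermite_def entries_le_iff using reps_mod_O rho_pos rho_lt1 by (simp add: av_power power_le_one)

lemma hermite_det: "a \<le> n \<Longrightarrow> det (hermite n a c) = unif ^ n"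
  unfolding hermite_def det_matrix2 by (simp add: power_add[symmetric])

lemma hermite_uniq:
  assumes "a \<le> n" "a' \<le> n" "c \<in> reps_mod (n - a)" "c' \<in> reps_mod (n - a')" "w \<in> GL2_O" "hermite n a' c' = hermite n a c ** w"
  shows "a = a' \<and> c = c'"
proof -
  have e: "unif ^ a' = unif ^ a * w$1$1" "0 = unif ^ a * w$1$2" "c' = c * w$1$1 + unif ^ (n-a) * w$2$1"
     "unif ^ (n-a') = c * w$1$2 + unif ^ (n-a) * w$2$2"
    using assms(6) unfolding hermite_def mat2_eq mult_entry by simp_all
  have w12: "w$1$2 = 0" using e(2) by simp
  have "absv (det w) = 1" using assms(5) unfolding GL2_O_def by simp
  hence "absv (w$1$1) * absv (w$2$2) = 1" unfolding det_2 using w12 by (simp add: av_mult)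
  moreover have "absv (w$1$1) \<le> 1" "absv (w$2$2) \<le> 1" using assms(5) unfolding GL2_O_def entries_le_def by auto
  ultimately have w11: "absv (w$1$1) = 1"
  proof -
    assume p: "absv (w$1$1) * absv (w$2$2) = 1" "absv (w$1$1) \<le> 1" "absv (w$2$2) \<le> 1"
    have "absv (w$1$1) * absv (w$2$2) \<le> absv (w$1$1)" using p(3) by (simp add: mult_right_le_one_le)
    thus ?thesis using p(1,2) by linarith
  qed
  have "absv (unif ^ a') = absv (unif ^ a * w$1$1)" using e(1) by simp
  hence "\<rho> ^ a' = \<rho> ^ a" using w11 by (simp add: av_mult av_power)
  hence "\<rho> powi (int a') = \<rho> powi (int a)" by simp
  hence "int a' = int a" using rho_powi_inj by blast
  hence aa: "a = a'" by simp
  hence "w$1$1 = 1" using e(1) by simp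
  hence "c' - c = unif ^ (n-a) * w$2$1" using e(3) by simp
  hence "absv (c' - c) \<le> \<rho> ^ (n-a)" using assms(5) unfolding GL2_O_def entries_le_def
    by (simp add: av_mult av_power mult_le_cancel_left1 rho_pos)
  hence "c' = c" using reps_mod_uniq assms aa by blast
  thus ?thesis using aa by simp
qed

lemma hermite_form_lower:
  assumes "absv x \<le> 1" "absv y \<le> 1" "absv z \<le> 1" "absv (x*z) = \<rho> ^ n"
  shows "\<exists>a c w. a \<le> n \<and> c \<in> reps_mod (n-a) \<and> w \<in> GL2_O \<and> matrix2 x 0 y z ** w = hermite n a c"
proof -
  have xz: "x \<noteq> 0" "z \<noteq> 0" using assms(4) rho_pos by auto
  obtain a where a: "absv x = \<rho> ^ a" using av_le1_eq_rho_power xz assms by blast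
  obtain b where b: "absv z = \<rho> ^ b" using av_le1_eq_rho_power xz assms by blast
  have "\<rho> ^ (a + b) = \<rho> ^ n" using assms(4) a b by (simp add: av_mult power_add)
  hence "\<rho> powi (int (a + b)) = \<rho> powi (int n)" by (simp only: power_int_of_nat)
  hence "int (a + b) = int n" using rho_powi_inj by blast
  hence ab: "a + b = n" by simp
  define u where "u = unif ^ a / x"
  define v where "v = unif ^ b / z"
  have u: "absv u = 1" unfolding u_def using a rho_pos by (simp add: av_divide av_power)
  have v: "absv v = 1" unfolding v_def using b rho_pos by (simp add: av_divide av_power)
  define y' where "y' = y * u"
  have y': "absv y' \<le> 1" unfolding y'_def using u assms by (simp add: av_mult)
  obtain c where c: "c \<in> reps_mod b" "absv (y' - c) \<le> \<rho> ^ b" using reps_mod_ex[OF y'] by blast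
  define t where "t = (c - y') / unif ^ b"
  have t: "absv t \<le> 1" unfolding t_def using c rho_pos by (simp add: av_divide av_power av_sym)
  define w where "w = matrix2 u 0 (v * t) v"
  have "w \<in> GL2_O" unfolding GL2_O_def w_def using u v t by (simp add: entries_le_iff det_matrix2 av_mult)
  moreover have "matrix2 x 0 y z ** w = hermite n a c"
  proof -
    have "x * u = unif ^ a" unfolding u_def using xz by simp
    moreover have "z * v = unif ^ b" unfolding v_def using xz by simp
    moreover have "y * u + z * (v * t) = c"
    proof -
      have "z * (v * t) = (z * v) * t" by (simp only: mult.assoc)
      also have "\<dots> = unif ^ b * ((c - y') / unif ^ b)" using \<open>z * v = unif ^ b\<close> t_def by simp
      also have "\<dots> = c - y'" by simp
      finally show ?thesis unfolding y'_def by simp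
    qed
    moreover have "b = n - a" using ab by simp
    ultimately show ?thesis unfolding w_def hermite_def mat2_eq mult_entry by simp
  qed
  ultimately show ?thesis using ab c by (intro exI[of _ a] exI[of _ c] exI[of _ w]) auto
qed

lemma hermite_form_ordered:
  assumes "entries_le 1 M" "absv (det M) = \<rho> ^ n" "absv (M$1$2) \<le> absv (M$1$1)"
  shows "\<exists>a c w. a \<le> n \<and> c \<in> reps_mod (n-a) \<and> w \<in> GL2_O \<and> M ** w = hermite n a c"
proof -
  have m11: "M$1$1 \<noteq> 0"
  proof
    assume "M$1$1 = 0"
    hence "absv (M$1$2) \<le> 0" using assms(3) by simp
    hence "M$1$2 = 0" using av_nonneg[of "M$1$2"] av_zero_iff[of "M$1$2"] by linarith
    hence "det M = 0" using \<open>M$1$1 = 0\<close> by (simp add: det_2)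
    thus False using assms(2) rho_pos by simp
  qed
  define e where "e = - M$1$2 / M$1$1"
  have e: "absv e \<le> 1" unfolding e_def using assms(3) m11 by (simp add: av_divide divide_le_eq_1)
  define w1 where "w1 = matrix2 1 e 0 1"
  have w1: "w1 \<in> GL2_O" unfolding GL2_O_def w1_def using e by (simp add: entries_le_iff det_matrix2)
  define z where "z = M$2$2 + M$2$1 * e"
  have "M ** w1 = matrix2 (M$1$1) 0 (M$2$1) z"
    unfolding w1_def mat2_eq mult_entry z_def e_def using m11 by simp
  moreover have bz: "absv z \<le> 1"
    unfolding z_def using assms(1) e unfolding entries_le_iff by (intro av_add_le) (auto simp: av_mult mult_le_one)
  moreover have "det (M ** w1) = det M" using w1 unfolding w1_def by (simp add: det_mul det_matrix2)
  ultimately have "absv (M$1$1 * z) = \<rho> ^ n" using assms(2) by (simp add: det_matrix2)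
  then obtain a c w where h: "a \<le> n" "c \<in> reps_mod (n-a)" "w \<in> GL2_O" "matrix2 (M$1$1) 0 (M$2$1) z ** w = hermite n a c"
    using hermite_form_lower[of "M$1$1" "M$2$1" z n] assms(1) bz unfolding entries_le_iff by blast
  have "M ** (w1 ** w) = hermite n a c" using h(4) \<open>M ** w1 = matrix2 (M$1$1) 0 (M$2$1) z\<close> by (simp add: matrix_mul_assoc)
  moreover have "w1 ** w \<in> GL2_O" using GL2_O_mult w1 h(3) by blast
  ultimately show ?thesis using h by blast
qed

lemma hermite_form:
  assumes "entries_le 1 M" "absv (det M) = \<rho> ^ n"
  shows "\<exists>a c w. a \<le> n \<and> c \<in> reps_mod (n-a) \<and> w \<in> GL2_O \<and> M ** w = hermite n a c"
proof (cases "absv (M$1$2) \<le> absv (M$1$1)")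
  case True thus ?thesis using hermite_form_ordered assms by blast
next
  case False
  define sw :: "'a mat2" where "sw = matrix2 0 1 1 0"
  have sw: "sw \<in> GL2_O" unfolding GL2_O_def sw_def by (simp add: entries_le_iff det_matrix2)
  have M': "(M ** sw)$1$1 = M$1$2" "(M ** sw)$1$2 = M$1$1" unfolding sw_def mult_entry by simp_all
  have "entries_le 1 (M ** sw)" using entries_le_mult[OF assms(1), of 1 sw] sw unfolding GL2_O_def by simp
  moreover have "absv (det (M ** sw)) = \<rho> ^ n" using assms(2) sw unfolding GL2_O_def by (simp add: det_mul av_mult)
  moreover have "absv ((M ** sw)$1$2) \<le> absv ((M ** sw)$1$1)" using False M' by simp
  ultimately obtain a c w where h: "a \<le> n" "c \<in> reps_mod (n-a)" "w \<in> GL2_O" "(M ** sw) ** w = hermite n a c"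
    using hermite_form_ordered by blast
  hence "M ** (sw ** w) = hermite n a c" by (simp add: matrix_mul_assoc)
  moreover have "sw ** w \<in> GL2_O" using GL2_O_mult sw h(3) by blast
  ultimately show ?thesis using h by blast
qed

lemma step_fun_mono: "step_fun r s f \<Longrightarrow> r \<le> r' \<Longrightarrow> s \<le> s' \<Longrightarrow> step_fun r' s' f"
proof -
  assume a: "step_fun r s f" "r \<le> r'" "s \<le> s'"
  have "\<rho> ^ r' \<le> \<rho> ^ r" using rho_pow_antimono a by blast
  moreover have "inverse \<rho> ^ s \<le> inverse \<rho> ^ s'" using inverse_rho_pow_mono a by blast
  ultimately show ?thesis using a(1) entries_le_mono unfolding step_fun_def by (meson order_trans)
qed

definition GL2_step_fun :: "('a mat2 \<Rightarrow> complex) \<Rightarrow> bool" where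
  "GL2_step_fun f \<longleftrightarrow> (\<exists>r s c. step_fun r s f \<and> c > 0 \<and> (\<forall>M. f M \<noteq> 0 \<longrightarrow> c \<le> absv (det M)))"

lemma GL2_step_fun_Sch: "GL2_step_fun f \<Longrightarrow> f \<in> Sch absv GL2"
  unfolding GL2_step_fun_def using step_fun_Sch_GL2 by blast

lemma GL2_step_fun_zero: "GL2_step_fun (\<lambda>M. 0)"
  unfolding GL2_step_fun_def step_fun_def by (rule exI[of _ 0], rule exI[of _ 0], rule exI[of _ 1]) simp

lemma GL2_step_fun_add:
  assumes "GL2_step_fun f" "GL2_step_fun h"
  shows "GL2_step_fun (\<lambda>M. f M + h M)"
proof -
  obtain r s c where f: "step_fun r s f" "c > 0" "\<forall>M. f M \<noteq> 0 \<longrightarrow> c \<le> absv (det M)" using assms unfolding GL2_step_fun_def by blast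
  obtain r' s' c' where h: "step_fun r' s' h" "c' > 0" "\<forall>M. h M \<noteq> 0 \<longrightarrow> c' \<le> absv (det M)" using assms unfolding GL2_step_fun_def by blast
  have f': "step_fun (max r r') (max s s') f" using step_fun_mono[OF f(1)] by simp
  have h': "step_fun (max r r') (max s s') h" using step_fun_mono[OF h(1)] by simp
  have "\<forall>M. f M + h M \<noteq> 0 \<longrightarrow> entries_le (inverse \<rho> ^ max s s') M"
  proof (intro allI impI)
    fix M assume "f M + h M \<noteq> 0"
    hence "f M \<noteq> 0 \<or> h M \<noteq> 0" by auto
    thus "entries_le (inverse \<rho> ^ max s s') M" using f' h' unfolding step_fun_def by blast
  qed
  hence "step_fun (max r r') (max s s') (\<lambda>M. f M + h M)"
    using f' h' unfolding step_fun_def by auto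
  moreover have "\<forall>M. f M + h M \<noteq> 0 \<longrightarrow> min c c' \<le> absv (det M)"
  proof (intro allI impI)
    fix M assume "f M + h M \<noteq> 0"
    hence "f M \<noteq> 0 \<or> h M \<noteq> 0" by auto
    thus "min c c' \<le> absv (det M)" using f(3) h(3) by (meson min.coboundedI1 min.coboundedI2 order_trans)
  qed
  ultimately show ?thesis unfolding GL2_step_fun_def using f h by (intro exI[of _ "max r r'"] exI[of _ "max s s'"] exI[of _ "min c c'"]) auto
qed

lemma GL2_step_fun_scale:
  assumes "GL2_step_fun f"
  shows "GL2_step_fun (\<lambda>M. a * f M)"
proof -
  obtain r s c where f: "step_fun r s f" "c > 0" "\<forall>M. f M \<noteq> 0 \<longrightarrow> c \<le> absv (det M)" using assms unfolding GL2_step_fun_def by blast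
  have "step_fun r s (\<lambda>M. a * f M)" using f(1) unfolding step_fun_def by auto
  thus ?thesis unfolding GL2_step_fun_def using f by (intro exI[of _ r] exI[of _ s] exI[of _ c]) auto
qed

lemma GL2_step_fun_sum: "finite I \<Longrightarrow> (\<And>t. t \<in> I \<Longrightarrow> GL2_step_fun (\<phi> t)) \<Longrightarrow> GL2_step_fun (\<lambda>M. \<Sum>t\<in>I. \<phi> t M)"
proof (induction I rule: finite_induct)
  case empty thus ?case using GL2_step_fun_zero by simp
next
  case (insert a I)
  thus ?case using GL2_step_fun_add[of "\<phi> a" "\<lambda>M. \<Sum>t\<in>I. \<phi> t M"] by simp
qed

lemma GL2_step_fun_translate:
  assumes "GL2_step_fun f" "det g \<noteq> 0"
  shows "GL2_step_fun (\<lambda>M. f (g ** M))"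
proof -
  obtain r s c where f: "step_fun r s f" "c > 0" "\<forall>M. f M \<noteq> 0 \<longrightarrow> c \<le> absv (det M)" using assms unfolding GL2_step_fun_def by blast
  obtain r' s' where n: "step_fun r' s' (\<lambda>M. f (g ** M))" using step_fun_translate f(1) assms(2) by blast
  have dg: "absv (det g) > 0" using assms by simp
  have "c / absv (det g) \<le> absv (det M)" if "f (g ** M) \<noteq> 0" for M
  proof -
    have "c \<le> absv (det (g ** M))" using f(3) that by blast
    hence "c \<le> absv (det g) * absv (det M)" by (simp add: det_mul av_mult)
    thus ?thesis using dg by (simp add: divide_le_eq mult.commute)
  qed
  thus ?thesis unfolding GL2_step_fun_def using n f dg by (intro exI[of _ r'] exI[of _ s'] exI[of _ "c / absv (det g)"]) auto
qed

definition congr_ind :: "nat \<Rightarrow> 'a mat2 \<Rightarrow> complex" where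
  "congr_ind r M = (if M \<in> congr_subgroup r then 1 else 0)"

definition coset_ind :: "nat \<Rightarrow> 'a mat2 \<Rightarrow> 'a mat2 \<Rightarrow> complex" where
  "coset_ind r g M = congr_ind r (inv2 g ** M)"

lemma congr_subgroup_close:
  assumes "M \<in> congr_subgroup r" "mdist absv M N \<le> \<rho> ^ r"
  shows "N \<in> congr_subgroup r"
proof -
  have "mdist absv N M \<le> \<rho> ^ r" using assms(2) mdist_sym[of M N] by simp
  hence "entries_le (\<rho> ^ r) (N - M)" using mdist_entries_le by blast
  hence b1: "entries_le 1 (N - M)" using entries_le_mono rho_pow_le_1 by blast
  have "N = (N - M) + M" by simp
  moreover have "entries_le 1 M" using assms(1) unfolding congr_subgroup_def by simp
  ultimately have bN: "entries_le 1 N" using entries_le_add[OF b1, of M] by simp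
  have "N - mat 1 = (N - M) + (M - mat 1)" by simp
  moreover have "entries_le (\<rho> ^ r) (M - mat 1)" using assms(1) unfolding congr_subgroup_def by simp
  ultimately have "entries_le (\<rho> ^ r) (N - mat 1)" using entries_le_add[OF \<open>entries_le (\<rho> ^ r) (N - M)\<close>, of "M - mat 1"] by simp
  thus ?thesis using bN unfolding congr_subgroup_def by simp
qed

lemma GL2_step_fun_congr_ind:
  assumes "r \<ge> 1"
  shows "GL2_step_fun (congr_ind r)"
proof -
  have "step_fun r 0 (congr_ind r)" unfolding step_fun_def congr_ind_def
  proof (intro conjI allI impI)
    fix M N assume a: "mdist absv M N \<le> \<rho> ^ r"
    hence "mdist absv M N \<le> \<rho> ^ r" .
    moreover have "mdist absv N M \<le> \<rho> ^ r" using \<open>mdist absv M N \<le> \<rho> ^ r\<close> mdist_sym[of M N] by simp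
    ultimately have "M \<in> congr_subgroup r \<longleftrightarrow> N \<in> congr_subgroup r" using congr_subgroup_close by blast
    thus "(if M \<in> congr_subgroup r then 1 else 0) = (if N \<in> congr_subgroup r then 1 else 0)" by simp
  next
    fix M assume "(if M \<in> congr_subgroup r then 1 else 0) \<noteq> (0::complex)"
    thus "entries_le (inverse \<rho> ^ 0) M" unfolding congr_subgroup_def by (auto split: if_splits)
  qed
  moreover have "\<forall>M. congr_ind r M \<noteq> 0 \<longrightarrow> 1 \<le> absv (det M)" unfolding congr_ind_def using congr_subgroup_det assms
    by (auto split: if_splits)
  ultimately show ?thesis unfolding GL2_step_fun_def by (intro exI[of _ r] exI[of _ 0] exI[of _ 1]) auto
qed

lemma GL2_step_fun_coset_ind:
  assumes "r \<ge> 1" "det g \<noteq> 0"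
  shows "GL2_step_fun (coset_ind r g)"
proof -
  have "det (inv2 g) \<noteq> 0" using det_inv2[OF assms(2)] assms(2) by simp
  thus ?thesis unfolding coset_ind_def using GL2_step_fun_translate[OF GL2_step_fun_congr_ind[OF assms(1)]] by blast
qed

lemma coset_ind_iff:
  assumes "det g \<noteq> 0"
  shows "coset_ind r g M = (if \<exists>u\<in>congr_subgroup r. M = g ** u then 1 else 0)"
proof -
  have "(inv2 g ** M \<in> congr_subgroup r) \<longleftrightarrow> (\<exists>u\<in>congr_subgroup r. M = g ** u)"
  proof
    assume "inv2 g ** M \<in> congr_subgroup r"
    moreover have "M = g ** (inv2 g ** M)" using inv2_cancel'[OF assms, of M] by simp
    ultimately show "\<exists>u\<in>congr_subgroup r. M = g ** u" by blast
  next
    assume "\<exists>u\<in>congr_subgroup r. M = g ** u"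
    then obtain u where "u \<in> congr_subgroup r" "M = g ** u" by blast
    thus "inv2 g ** M \<in> congr_subgroup r" using inv2_cancel[OF assms, of u] by simp
  qed
  thus ?thesis unfolding coset_ind_def congr_ind_def by simp
qed

section \<open>The shells of the integral matrices\<close>


text \<open>The cosets \<open>shell_rep n t ** congr_subgroup r\<close>, \<open>t \<in> shell_idx n r\<close>, partition the integral matrices
  with \<open>|det| = \<rho>\<^sup>n\<close> (lemmas \<open>shell_rep_coset_exists\<close> and \<open>shell_rep_coset_unique\<close>).\<close>
definition shell_idx :: "nat \<Rightarrow> nat \<Rightarrow> (nat \<times> 'a \<times> 'a mat2) set" where
  "shell_idx n r = Sigma {..n} (\<lambda>a. reps_mod (n - a) \<times> congr_reps r)"

definition shell_rep :: "nat \<Rightarrow> nat \<times> 'a \<times> 'a mat2 \<Rightarrow> 'a mat2" where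
  "shell_rep n t = hermite n (fst t) (fst (snd t)) ** snd (snd t)"

lemma shell_idx_finite: "finite (shell_idx n r)"
  unfolding shell_idx_def using reps_mod_finite congr_reps_finite by (intro finite_SigmaI) auto

lemma congr_reps_GL2_O: "k \<in> congr_reps r \<Longrightarrow> k \<in> GL2_O" unfolding congr_reps_def by simp

lemma shell_rep_integral_det:
  assumes "t \<in> shell_idx n r"
  shows "entries_le 1 (shell_rep n t)" "absv (det (shell_rep n t)) = \<rho> ^ n" "det (shell_rep n t) \<noteq> 0"
proof -
  obtain a c k where t: "t = (a, c, k)" "a \<le> n" "c \<in> reps_mod (n - a)" "k \<in> congr_reps r"
    using assms unfolding shell_idx_def by auto
  have k: "entries_le 1 k" "absv (det k) = 1" using congr_reps_GL2_O[OF t(4)] unfolding GL2_O_def by auto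
  show "entries_le 1 (shell_rep n t)" unfolding shell_rep_def t using entries_le_mult[OF hermite_entries_le[OF t(3)] k(1)] by simp
  show "absv (det (shell_rep n t)) = \<rho> ^ n" unfolding shell_rep_def t using hermite_det[OF t(2)] k
    by (simp add: det_mul av_mult av_power)
  thus "det (shell_rep n t) \<noteq> 0" using rho_pos by auto
qed


lemma shell_rep_coset_unique:
  assumes r: "r \<ge> 1" and t: "t \<in> shell_idx n r" and t': "t' \<in> shell_idx n r"
    and u: "u \<in> congr_subgroup r" "M = shell_rep n t ** u" and u': "u' \<in> congr_subgroup r" "M = shell_rep n t' ** u'"
  shows "t = t'"
proof -
  obtain a c k where tt: "t = (a, c, k)" "a \<le> n" "c \<in> reps_mod (n - a)" "k \<in> congr_reps r"
    using t unfolding shell_idx_def by auto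
  obtain a' c' k' where tt': "t' = (a', c', k')" "a' \<le> n" "c' \<in> reps_mod (n - a')" "k' \<in> congr_reps r"
    using t' unfolding shell_idx_def by auto
  have ku: "k \<in> GL2_O" "k' \<in> GL2_O" "u \<in> GL2_O" "u' \<in> GL2_O" using congr_reps_GL2_O tt tt' congr_subgroup_GL2_O r u u' by auto
  have dn: "det k' \<noteq> 0" "det u' \<noteq> 0" "det u \<noteq> 0" using GL2_O_det ku by auto
  define w where "w = k ** (u ** (inv2 u' ** inv2 k'))"
  have wK: "w \<in> GL2_O" unfolding w_def using ku GL2_O_mult GL2_O_inv by simp
  have e1: "hermite n a c ** (k ** u) = hermite n a' c' ** (k' ** u')"
    using u u' tt tt' unfolding shell_rep_def by (simp add: matrix_mul_assoc)
  have "hermite n a c ** w = (hermite n a c ** (k ** u)) ** (inv2 u' ** inv2 k')"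
    unfolding w_def by (simp add: matrix_mul_assoc)
  also have "\<dots> = hermite n a' c' ** (k' ** (u' ** inv2 u') ** inv2 k')" unfolding e1 by (simp add: matrix_mul_assoc)
  also have "\<dots> = hermite n a' c'" using inv2_right[OF dn(2)] inv2_right[OF dn(1)] by simp
  finally have "hermite n a' c' = hermite n a c ** w" by simp
  hence ac: "a = a' \<and> c = c'" using hermite_uniq[OF tt(2) tt'(2) tt(3) tt'(3) wK] by blast
  have dH: "det (hermite n a c) \<noteq> 0" using hermite_det[OF tt(2)] by simp
  have "k ** u = k' ** u'" using e1 ac inv2_cancel[OF dH] by metis
  hence "inv2 k' ** k = u' ** inv2 u"
  proof -
    assume ku': "k ** u = k' ** u'"
    have "inv2 k' ** k = inv2 k' ** ((k ** u) ** inv2 u)" using inv2_right[OF dn(3)] by (simp add: matrix_mul_assoc[symmetric])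
    also have "\<dots> = u' ** inv2 u" using ku' inv2_cancel[OF dn(1)] by (simp add: matrix_mul_assoc[symmetric])
    finally show ?thesis .
  qed
  moreover have "u' ** inv2 u \<in> congr_subgroup r" using congr_subgroup_mult congr_subgroup_inv r u u' by blast
  ultimately have "k = k'" using congr_reps_uniq tt(4) tt'(4) by simp
  thus ?thesis using tt tt' ac by simp
qed

lemma shell_rep_coset_exists:
  assumes r: "r \<ge> 1" and M: "entries_le 1 M" "absv (det M) = \<rho> ^ n"
  shows "\<exists>t\<in>shell_idx n r. \<exists>u\<in>congr_subgroup r. M = shell_rep n t ** u"
proof -
  obtain a c w where h: "a \<le> n" "c \<in> reps_mod (n-a)" "w \<in> GL2_O" "M ** w = hermite n a c" using hermite_form M by blast
  have dw: "det w \<noteq> 0" using GL2_O_det h by blast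
  obtain k where k: "k \<in> congr_reps r" "inv2 k ** inv2 w \<in> congr_subgroup r" using congr_reps_ex[OF r GL2_O_inv[OF h(3)]] by blast
  have dk: "det k \<noteq> 0" using GL2_O_det congr_reps_GL2_O k by blast
  have "shell_rep n (a, c, k) ** (inv2 k ** inv2 w) = hermite n a c ** (k ** (inv2 k ** inv2 w))"
    unfolding shell_rep_def by (simp add: matrix_mul_assoc)
  also have "\<dots> = hermite n a c ** inv2 w" using inv2_cancel'[OF dk, of "inv2 w"] by simp
  also have "\<dots> = M" using h(4)[symmetric] inv2_right[OF dw] by (simp add: matrix_mul_assoc[symmetric])
  finally have "M = shell_rep n (a, c, k) ** (inv2 k ** inv2 w)" by simp
  moreover have "(a, c, k) \<in> shell_idx n r" unfolding shell_idx_def using h k by simp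
  ultimately show ?thesis using k by blast
qed

lemma shell_rep_coset_props:
  assumes r: "r \<ge> 1" and t: "t \<in> shell_idx n r" and u: "u \<in> congr_subgroup r" "M = shell_rep n t ** u"
  shows "entries_le 1 M" "absv (det M) = \<rho> ^ n" "mdist absv M (shell_rep n t) \<le> \<rho> ^ r"
proof -
  have g: "entries_le 1 (shell_rep n t)" "absv (det (shell_rep n t)) = \<rho> ^ n" using shell_rep_integral_det[OF t] by auto
  have ub: "entries_le 1 u" "entries_le (\<rho> ^ r) (u - mat 1)" using u unfolding congr_subgroup_def by auto
  show "entries_le 1 M" using entries_le_mult[OF g(1) ub(1)] u by simp
  show "absv (det M) = \<rho> ^ n" using u g congr_subgroup_det[OF r u(1)] by (simp add: det_mul av_mult)
  have "M - shell_rep n t = shell_rep n t ** (u - mat 1)" using u by (simp add: matrix_diff_ldistrib)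
  moreover have "entries_le (1 * \<rho> ^ r) (shell_rep n t ** (u - mat 1))" using entries_le_mult[OF g(1) ub(2)] by simp
  ultimately show "mdist absv M (shell_rep n t) \<le> \<rho> ^ r" using mdist_entries_le by simp
qed

abbreviation rho_c :: complex where "rho_c \<equiv> complex_of_real \<rho>"

sublocale geometric_tail rho_c
  by unfold_locales (use rho_pos rho_lt1 in auto)

lemma mdist_matrix2: "absv (a - a') \<le> e \<Longrightarrow> absv (b - b') \<le> e \<Longrightarrow> absv (c - c') \<le> e \<Longrightarrow> absv (d - d') \<le> e
   \<Longrightarrow> mdist absv (matrix2 a b c d) (matrix2 a' b' c' d') \<le> e"
  unfolding mdist_le by (auto simp: forall_2)

lemma rho_c_q_res: "rho_c ^ k * of_nat (q_res ^ k) = 1"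
proof -
  have "\<rho> ^ k * real (q_res ^ k) = 1" using rho_q_res q_res_ge2 by (simp add: power_mult_distrib[symmetric])
  hence "complex_of_real (\<rho> ^ k * real (q_res ^ k)) = 1" by simp
  thus ?thesis by simp
qed

lemma rho_c_q_res_diff: "a + r \<le> n \<Longrightarrow> rho_c ^ n * of_nat (q_res ^ (n - a - r)) = rho_c ^ (a + r)"
proof -
  assume "a + r \<le> n"
  hence "n = (a + r) + (n - a - r)" by simp
  hence "rho_c ^ n = rho_c ^ (a + r) * rho_c ^ (n - a - r)" by (metis power_add)
  thus ?thesis using rho_c_q_res[of "n - a - r"] by (simp add: mult.assoc)
qed

definition hermite_layer :: "nat \<Rightarrow> nat \<Rightarrow> ('a mat2 \<Rightarrow> complex) \<Rightarrow> complex" where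
  "hermite_layer n a G = (\<Sum>c\<in>reps_mod (n - a). G (hermite n a c))"

definition hermite_sum :: "nat \<Rightarrow> ('a mat2 \<Rightarrow> complex) \<Rightarrow> complex" where
  "hermite_sum n G = (\<Sum>a\<in>{0..<Suc n}. hermite_layer n a G)"

lemma lower_triangular_cong:
  assumes G: "\<And>M N. mdist absv M N \<le> \<rho> ^ r \<Longrightarrow> G M = G N"
    and "absv (x - x') \<le> \<rho> ^ r" "absv (c - c') \<le> \<rho> ^ r" "absv (y - y') \<le> \<rho> ^ r"
  shows "G (matrix2 x 0 c y) = G (matrix2 x' 0 c' y')"
  using assms rho_pos by (intro G mdist_matrix2) auto

lemma rho_c_pow_sum_reps_mod:
  assumes G: "\<And>M N. mdist absv M N \<le> \<rho> ^ r \<Longrightarrow> G M = G N" and "a + r \<le> n"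
  shows "rho_c ^ n * (\<Sum>c\<in>reps_mod (n - a). G (matrix2 x 0 c y)) = rho_c ^ (a + r) * (\<Sum>c\<in>reps_mod r. G (matrix2 x 0 c y))"
proof -
  have "(\<Sum>c\<in>reps_mod (n - a). G (matrix2 x 0 c y)) = of_nat (q_res ^ (n - a - r)) * (\<Sum>c\<in>reps_mod r. G (matrix2 x 0 c y))"
    using assms by (intro reps_mod_sum_mod lower_triangular_cong[OF G]) (auto simp: diff_diff_left)
  thus ?thesis using rho_c_q_res_diff[OF assms(2)] by (simp add: mult.assoc[symmetric])
qed

lemma av_unif_pow_le: "r \<le> k \<Longrightarrow> absv (unif ^ k) \<le> \<rho> ^ r"
  using rho_pow_antimono by (simp add: av_power)

lemma hermite_layer_low:
  assumes G: "\<And>M N. mdist absv M N \<le> \<rho> ^ r \<Longrightarrow> G M = G N" and "a + r \<le> n"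
  shows "rho_c ^ n * hermite_layer n a G = rho_c ^ (a + r) * (\<Sum>c\<in>reps_mod r. G (matrix2 (unif ^ a) 0 c 0))"
proof -
  have "hermite_layer n a G = (\<Sum>c\<in>reps_mod (n - a). G (matrix2 (unif ^ a) 0 c 0))"
    unfolding hermite_layer_def hermite_def
    using assms(2) av_unif_pow_le[of r "n - a"] by (intro sum.cong refl lower_triangular_cong[OF G]) auto
  thus ?thesis using rho_c_pow_sum_reps_mod[OF assms] by simp
qed

lemma hermite_layer_middle:
  assumes G: "\<And>M N. mdist absv M N \<le> \<rho> ^ r \<Longrightarrow> G M = G N" and "r \<le> a" "a + r \<le> n"
  shows "rho_c ^ n * hermite_layer n a G = rho_c ^ (a + r) * (\<Sum>c\<in>reps_mod r. G (matrix2 0 0 c 0))"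
proof -
  have "hermite_layer n a G = (\<Sum>c\<in>reps_mod (n - a). G (matrix2 0 0 c 0))"
    unfolding hermite_layer_def hermite_def
    using assms(2,3) av_unif_pow_le[of r a] av_unif_pow_le[of r "n - a"]
    by (intro sum.cong refl lower_triangular_cong[OF G]) auto
  thus ?thesis using rho_c_pow_sum_reps_mod[OF G assms(3)] by simp
qed

lemma hermite_layer_high:
  assumes G: "\<And>M N. mdist absv M N \<le> \<rho> ^ r \<Longrightarrow> G M = G N" and "r \<le> a"
  shows "hermite_layer n a G = (\<Sum>c\<in>reps_mod (n - a). G (matrix2 0 0 c (unif ^ (n - a))))"
  unfolding hermite_layer_def hermite_def
  using assms(2) av_unif_pow_le[of r a] by (intro sum.cong refl lower_triangular_cong[OF G]) auto

lemma hermite_sum_split: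
  assumes n: "2 * r \<le> n"
  shows "hermite_sum n G = (\<Sum>a\<in>{0..<r}. hermite_layer n a G) + (\<Sum>a\<in>{r..<r + (n + 1 - 2*r)}. hermite_layer n a G)
    + (\<Sum>a\<in>{n+1-r..<Suc n}. hermite_layer n a G)"
proof -
  let ?F = "\<lambda>a. hermite_layer n a G"
  have "(\<Sum>a\<in>{0..<r}. ?F a) + (\<Sum>a\<in>{r..<n+1-r}. ?F a) = (\<Sum>a\<in>{0..<n+1-r}. ?F a)"
    using n by (intro sum.atLeastLessThan_concat) auto
  moreover have "(\<Sum>a\<in>{0..<n+1-r}. ?F a) + (\<Sum>a\<in>{n+1-r..<Suc n}. ?F a) = (\<Sum>a\<in>{0..<Suc n}. ?F a)"
    using n by (intro sum.atLeastLessThan_concat) auto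
  moreover have "r + (n + 1 - 2*r) = n + 1 - r" using n by simp
  ultimately show ?thesis unfolding hermite_sum_def by simp
qed

lemma geometric_sum_shifted: "(\<Sum>a\<in>{r..<r+m}. rho_c ^ (a + r)) * (1 - rho_c) = rho_c ^ (2*r) - rho_c ^ (2*r+m)"
proof (induction m)
  case (Suc m)
  have e: "r + m + r = 2*r + m" by simp
  have "(\<Sum>a\<in>{r..<r+Suc m}. rho_c ^ (a + r)) = (\<Sum>a\<in>{r..<r+m}. rho_c ^ (a + r)) + rho_c ^ (2*r + m)"
    using e by (simp del: mult_2 add: e[symmetric])
  hence "(\<Sum>a\<in>{r..<r+Suc m}. rho_c ^ (a + r)) * (1 - rho_c)
      = (rho_c ^ (2*r) - rho_c ^ (2*r+m)) + rho_c ^ (2*r+m) * (1 - rho_c)"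
    using Suc.IH by (simp add: distrib_right)
  thus ?case by (simp add: algebra_simps)
qed simp

text \<open>For \<open>n \<ge> 2r\<close> the layers \<open>a < r\<close> contribute a constant, the layers \<open>r \<le> a \<le> n - r\<close> a geometric
  sum, and the last \<open>r\<close> layers a constant before weighting by \<open>\<rho>\<^sup>n\<close>.\<close>
lemma hermite_sum_eventually:
  assumes r: "r \<ge> 1" and G: "\<And>M N. mdist absv M N \<le> \<rho> ^ r \<Longrightarrow> G M = G N"
  shows "\<exists>\<alpha> \<beta>. \<forall>n\<ge>2*r. rho_c ^ n * hermite_sum n G = \<alpha> + \<beta> * rho_c ^ n"
proof -
  define S1 where "S1 a = (\<Sum>c\<in>reps_mod r. G (matrix2 (unif ^ a) 0 c 0))" for a
  define C0 where "C0 = (\<Sum>c\<in>reps_mod r. G (matrix2 0 0 c 0))"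
  define B1 where "B1 = (\<Sum>b\<in>{0..<r}. \<Sum>c\<in>reps_mod b. G (matrix2 0 0 c (unif ^ b)))"
  have "rho_c ^ n * hermite_sum n G = (\<Sum>a\<in>{0..<r}. rho_c ^ (a + r) * S1 a) + C0 * rho_c ^ (2*r) / (1 - rho_c)
           + (B1 - C0 * rho_c / (1 - rho_c)) * rho_c ^ n" if n: "n \<ge> 2 * r" for n
  proof -
    let ?F = "\<lambda>a. hermite_layer n a G"
    have low: "rho_c ^ n * (\<Sum>a\<in>{0..<r}. ?F a) = (\<Sum>a\<in>{0..<r}. rho_c ^ (a + r) * S1 a)"
      unfolding sum_distrib_left using n
      by (intro sum.cong refl) (simp add: S1_def hermite_layer_low[OF G])
    have "rho_c ^ n * (\<Sum>a\<in>{r..<r + (n + 1 - 2*r)}. ?F a) = (\<Sum>a\<in>{r..<r + (n + 1 - 2*r)}. rho_c ^ (a + r) * C0)"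
      unfolding sum_distrib_left
    proof (intro sum.cong refl)
      fix a assume "a \<in> {r..<r + (n + 1 - 2*r)}"
      thus "rho_c ^ n * ?F a = rho_c ^ (a + r) * C0"
        unfolding C0_def using n by (intro hermite_layer_middle[OF G]) auto
    qed
    also have "\<dots> = C0 * (\<Sum>a\<in>{r..<r + (n + 1 - 2*r)}. rho_c ^ (a + r))"
      by (simp add: sum_distrib_left mult.commute)
    also have "\<dots> = C0 * ((rho_c ^ (2*r) - rho_c * rho_c ^ n) / (1 - rho_c))"
      using geometric_sum_shifted[of r "n + 1 - 2*r"] q_ne_1 n by (simp add: eq_divide_eq)
    finally have middle: "rho_c ^ n * (\<Sum>a\<in>{r..<r + (n + 1 - 2*r)}. ?F a) = \<dots>" .
    have "(\<Sum>a\<in>{n+1-r..<Suc n}. ?F a) = (\<Sum>a\<in>{n+1-r..<Suc n}. \<Sum>c\<in>reps_mod (n - a). G (matrix2 0 0 c (unif ^ (n - a))))"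
      using n by (intro sum.cong refl hermite_layer_high[OF G]) auto
    also have "\<dots> = B1" unfolding B1_def
      by (rule sum.reindex_bij_witness[of _ "\<lambda>b. n - b" "\<lambda>a. n - a"]) (use n r in auto)
    finally have high: "(\<Sum>a\<in>{n+1-r..<Suc n}. ?F a) = B1" .
    show ?thesis
      unfolding hermite_sum_split[OF n] distrib_left low middle high using q_ne_1
      by (simp add: diff_divide_distrib right_diff_distrib algebra_simps)
  qed
  thus ?thesis by blast
qed

lemma abs_det_eq_near:
  assumes M: "entries_le B M" and "1 \<le> B" and d: "mdist absv M N \<le> e" "e \<le> 1" and small: "B * e < absv (det M)"
  shows "absv (det N) = absv (det M)"
proof -
  have "mdist absv N M \<le> e" using d mdist_sym[of M N] by simp
  hence "mdist absv N M \<le> B" using d(2) \<open>1 \<le> B\<close> by linarith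
  hence N: "entries_le B N" by (rule entries_le_close[OF M])
  have "absv (det N - det M) \<le> B * mdist absv N M"
    using det_diff_entries_le[OF N M order_refl] \<open>1 \<le> B\<close> mdist_nonneg by simp
  also have "\<dots> \<le> B * e" using \<open>mdist absv N M \<le> e\<close> \<open>1 \<le> B\<close> by (intro mult_left_mono) auto
  finally have "absv (det N - det M) < absv (det M)" using small by simp
  thus ?thesis by (rule av_close_eq)
qed

lemma step_fun_det_shell:
  assumes f: "step_fun r s f"
  shows "GL2_step_fun (\<lambda>M. if absv (det M) = \<rho> powi n then c * f M else 0)"
proof -
  define B where "B = inverse \<rho> ^ s"
  have B: "B \<ge> 1" unfolding B_def using rho_pos rho_lt1 by (simp add: one_le_inverse one_le_power)
  obtain r0 where r0: "\<rho> ^ r0 < \<rho> powi n / B" using rho_pow_small[of "\<rho> powi n / B"] rho_powi_pos B by auto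
  define r' where "r' = max r r0"
  have r'1: "\<rho> ^ r' \<le> \<rho> ^ r" "\<rho> ^ r' \<le> \<rho> ^ r0" unfolding r'_def using rho_pow_antimono by auto
  have shell: "absv (det N) = \<rho> powi n" if "f M \<noteq> 0" "mdist absv M N \<le> \<rho> ^ r'" "absv (det M) = \<rho> powi n" for M N
  proof -
    have M: "entries_le B M" using f that unfolding step_fun_def B_def by blast
    have "B * \<rho> ^ r' \<le> B * \<rho> ^ r0" using r'1 B by (intro mult_left_mono) auto
    moreover have "B * \<rho> ^ r0 < \<rho> powi n" using r0 B by (simp add: less_divide_eq mult.commute)
    ultimately have "B * \<rho> ^ r' < absv (det M)" using that(3) by linarith
    thus ?thesis using abs_det_eq_near[OF M B that(2) rho_pow_le_1] that(3) by simp
  qed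
  have "step_fun r' s (\<lambda>M. if absv (det M) = \<rho> powi n then c * f M else 0)"
    unfolding step_fun_def
  proof (intro conjI allI impI)
    fix M N assume d: "mdist absv M N \<le> \<rho> ^ r'"
    hence fe: "f M = f N" using f r'1 unfolding step_fun_def by (meson order_trans)
    have d': "mdist absv N M \<le> \<rho> ^ r'" using d mdist_sym[of M N] by simp
    show "(if absv (det M) = \<rho> powi n then c * f M else 0) = (if absv (det N) = \<rho> powi n then c * f N else 0)"
    proof (cases "f M = 0")
      case True thus ?thesis using fe by simp
    next
      case False
      hence "f N \<noteq> 0" using fe by simp
      thus ?thesis using shell[OF False d] shell[OF \<open>f N \<noteq> 0\<close> d'] fe by auto
    qed
  next
    fix M assume "(if absv (det M) = \<rho> powi n then c * f M else 0) \<noteq> 0"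
    hence "f M \<noteq> 0" by (auto split: if_splits)
    thus "entries_le (inverse \<rho> ^ s) M" using f unfolding step_fun_def by blast
  qed
  moreover have "\<forall>M. (if absv (det M) = \<rho> powi n then c * f M else 0) \<noteq> 0 \<longrightarrow> \<rho> powi n \<le> absv (det M)"
    by auto
  ultimately show ?thesis unfolding GL2_step_fun_def using rho_powi_pos by blast
qed

lemma mdist_mult_right: "entries_le 1 k \<Longrightarrow> mdist absv (M ** k) (N ** k) \<le> mdist absv M N"
proof -
  assume k: "entries_le 1 k"
  have "M ** k - N ** k = (M - N) ** k" by (simp add: matrix_diff_rdistrib)
  moreover have "entries_le (mdist absv M N * 1) ((M - N) ** k)"
    using entries_le_mult[of "mdist absv M N" "M - N" 1 k] k mdist_entries_le[of M N] mdist_nonneg[of M N] by blast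
  ultimately show ?thesis using mdist_entries_le by simp
qed

lemma shell_idx_sum: "(\<Sum>t\<in>shell_idx n r. F (shell_rep n t)) = (\<Sum>k\<in>congr_reps r. hermite_sum n (\<lambda>M. F (M ** k)))"
proof -
  have "(\<Sum>t\<in>shell_idx n r. F (shell_rep n t)) = (\<Sum>a\<in>{..n}. \<Sum>ck\<in>reps_mod (n - a) \<times> congr_reps r. F (hermite n a (fst ck) ** snd ck))"
    unfolding shell_idx_def shell_rep_def using reps_mod_finite congr_reps_finite by (subst sum.Sigma) (auto simp: case_prod_beta)
  also have "\<dots> = (\<Sum>a\<in>{..n}. \<Sum>c\<in>reps_mod (n - a). \<Sum>k\<in>congr_reps r. F (hermite n a c ** k))"
    by (simp add: sum.cartesian_product case_prod_beta)
  also have "\<dots> = (\<Sum>a\<in>{..n}. \<Sum>k\<in>congr_reps r. \<Sum>c\<in>reps_mod (n - a). F (hermite n a c ** k))"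
    by (simp add: sum.swap[of _ "reps_mod _"])
  also have "\<dots> = (\<Sum>k\<in>congr_reps r. \<Sum>a\<in>{..n}. \<Sum>c\<in>reps_mod (n - a). F (hermite n a c ** k))"
    by (rule sum.swap)
  also have "\<dots> = (\<Sum>k\<in>congr_reps r. hermite_sum n (\<lambda>M. F (M ** k)))"
    unfolding hermite_sum_def hermite_layer_def by (simp add: atLeast0LessThan lessThan_Suc_atMost)
  finally show ?thesis .
qed

lemma rho_powi_neg_double: "\<rho> powi (- 2 * int s) = inverse \<rho> ^ s * inverse \<rho> ^ s"
proof -
  have "- 2 * int s = - int (s + s)" by simp
  hence "\<rho> powi (- 2 * int s) = inverse (\<rho> ^ (s + s))" by (simp only: power_int_minus power_int_of_nat)
  thus ?thesis by (simp add: power_add power_inverse)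
qed

lemma step_fun_det_le:
  assumes "step_fun r s f" "f M \<noteq> 0"
  shows "absv (det M) \<le> \<rho> powi (- 2 * int s)"
proof -
  have "entries_le (inverse \<rho> ^ s) M" using assms unfolding step_fun_def by blast
  thus ?thesis unfolding rho_powi_neg_double using entries_le_det rho_pos by simp
qed

lemma Sch_GL2_det_range:
  assumes f: "f \<in> Sch absv GL2"
  obtains L U where "L \<le> U" "\<And>M. f M \<noteq> 0 \<Longrightarrow> \<exists>n\<in>{L..U}. absv (det M) = \<rho> powi n"
proof -
  obtain r s where ns: "step_fun r s f" using Sch_GL2_step_fun f by blast
  obtain c where c: "c > 0" "\<forall>M. f M \<noteq> 0 \<longrightarrow> absv (det M) \<ge> c" using Sch_GL2_det_bounded_below f by blast
  obtain k where k: "\<rho> ^ k < c" using rho_pow_small c by blast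
  have "\<exists>n\<in>{- 2 * int s..int k}. absv (det M) = \<rho> powi n" if fM: "f M \<noteq> 0" for M
  proof -
    have "det M \<noteq> 0" using c fM by force
    then obtain n where n: "absv (det M) = \<rho> powi n" using av_eq_rho_powi by blast
    have "\<rho> powi n \<le> \<rho> powi (- 2 * int s)" using step_fun_det_le[OF ns fM] n by simp
    hence "- 2 * int s \<le> n" by (simp add: rho_powi_le_iff)
    moreover have "c \<le> \<rho> powi n" using c(2) fM n by fastforce
    hence "\<rho> powi int k < \<rho> powi n" using k by (simp add: power_int_of_nat)
    hence "n < int k" using rho_powi_less_iff[of "int k" n] by simp
    ultimately show ?thesis using n by auto
  qed
  moreover have "- 2 * int s \<le> int k" by simp
  ultimately show ?thesis using that by blast
qed

lemma sum_det_shells: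
  assumes "g M \<noteq> 0 \<Longrightarrow> \<exists>n\<in>{L..U}. absv (det M) = \<rho> powi n"
  shows "(\<Sum>n\<in>{L..U}. if absv (det M) = \<rho> powi n then g M else 0) = g M"
proof (cases "g M = 0")
  case False
  then obtain n0 where n0: "n0 \<in> {L..U}" "absv (det M) = \<rho> powi n0" using assms by blast
  hence "(\<Sum>n\<in>{L..U}. if absv (det M) = \<rho> powi n then g M else 0) = (\<Sum>n\<in>{L..U}. if n = n0 then g M else 0)"
    using rho_powi_inj by (intro sum.cong) auto
  thus ?thesis using n0 by simp
next
  case True
  thus ?thesis by (simp add: sum.neutral)
qed

lemma step_fun_rescale:
  assumes f: "step_fun r s f"
  obtains g where "g \<in> GL2" "absv (det g) = \<rho> powi (- 2 * int s)" "step_fun (r + s) 0 (\<lambda>M. f (g ** M))"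
proof -
  define g where "g = (mat (inverse unif ^ s) :: 'a mat2)"
  have ax: "absv (inverse unif ^ s) = inverse \<rho> ^ s" by (simp add: av_power av_inverse)
  have gM: "(g ** M) $ i $ j = inverse unif ^ s * M $ i $ j" for M :: "'a mat2" and i j
    unfolding g_def by (rule mat_mult_nth)
  have dg: "det g = inverse unif ^ s * inverse unif ^ s" unfolding g_def det_2 by simp
  have "g \<in> GL2" using dg unfolding GL2_def by simp
  moreover have "absv (det g) = \<rho> powi (- 2 * int s)" unfolding dg rho_powi_neg_double by (simp add: av_mult ax)
  moreover have "step_fun (r + s) 0 (\<lambda>M. f (g ** M))"
    unfolding step_fun_def
  proof (intro conjI allI impI)
    fix M N assume d: "mdist absv M N \<le> \<rho> ^ (r + s)"
    have "absv ((g ** M) $ i $ j - (g ** N) $ i $ j) \<le> \<rho> ^ r" for i j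
    proof -
      have "absv ((g ** M) $ i $ j - (g ** N) $ i $ j) = inverse \<rho> ^ s * absv (M $ i $ j - N $ i $ j)"
        unfolding gM by (simp add: right_diff_distrib[symmetric] av_mult ax)
      also have "\<dots> \<le> inverse \<rho> ^ s * \<rho> ^ (r + s)"
        using mdist_ge[of M i j N] d rho_pos by (intro mult_left_mono) auto
      also have "\<dots> = \<rho> ^ r" using rho_pos by (simp add: power_add power_inverse field_simps)
      finally show ?thesis .
    qed
    thus "f (g ** M) = f (g ** N)" using f mdist_le unfolding step_fun_def by blast
  next
    fix M assume "f (g ** M) \<noteq> 0"
    hence "entries_le (inverse \<rho> ^ s) (g ** M)" using f unfolding step_fun_def by blast
    hence "inverse \<rho> ^ s * absv (M $ i $ j) \<le> inverse \<rho> ^ s * 1" for i j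
      unfolding entries_le_def gM by (simp add: av_mult ax)
    hence "absv (M $ i $ j) \<le> 1" for i j using rho_pos by (simp add: mult_le_cancel_left)
    thus "entries_le (inverse \<rho> ^ 0) M" unfolding entries_le_def by simp
  qed
  ultimately show ?thesis by (rule that)
qed

lemma Sch_UNIV_translate: "f \<in> Sch absv UNIV \<Longrightarrow> g \<in> GL2 \<Longrightarrow> (\<lambda>M. f (g ** M)) \<in> Sch absv UNIV"
proof -
  assume f: "f \<in> Sch absv UNIV" and g: "g \<in> GL2"
  obtain r s where "step_fun r s f" using Sch_UNIV_step_fun f by blast
  moreover have "det g \<noteq> 0" using g unfolding GL2_def by simp
  ultimately obtain r' s' where "step_fun r' s' (\<lambda>M. f (g ** M))" using step_fun_translate by blast
  thus ?thesis by (rule step_fun_Sch_UNIV)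
qed

definition unit_ball_ind :: "'a mat2 \<Rightarrow> complex" where "unit_ball_ind M = (if entries_le 1 M then 1 else 0)"

lemma unit_ball_ind_step_fun: "step_fun r 0 unit_ball_ind"
  unfolding step_fun_def unit_ball_ind_def
proof (intro conjI allI impI)
  fix M N assume d: "mdist absv M N \<le> \<rho> ^ r"
  hence d1: "mdist absv M N \<le> 1" "mdist absv N M \<le> 1" using rho_pow_le_1[of r] mdist_sym[of M N] by linarith+
  have "entries_le 1 M \<longleftrightarrow> entries_le 1 N" using entries_le_close d1 by blast
  thus "(if entries_le 1 M then 1 else 0) = (if entries_le 1 N then 1 else (0::complex))" by simp
next
  fix M assume "(if entries_le 1 M then 1 else 0) \<noteq> (0::complex)"
  thus "entries_le (inverse \<rho> ^ 0) M" by (simp split: if_splits)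
qed

lemma congr_reps_nonempty: "r \<ge> 1 \<Longrightarrow> congr_reps r \<noteq> {}"
proof -
  assume r: "r \<ge> 1"
  have "mat 1 \<in> GL2_O" unfolding GL2_O_def using entries_le_1_mat_1 by (simp add: det_2)
  thus ?thesis using congr_reps_ex[OF r] by blast
qed

lemma card_shell_idx: "card (shell_idx n r) = card (congr_reps r) * (\<Sum>a\<in>{..n}. q_res ^ (n - a))"
proof -
  have "card (shell_idx n r) = (\<Sum>a\<in>{..n}. card (reps_mod (n - a) \<times> congr_reps r))"
    unfolding shell_idx_def using reps_mod_finite congr_reps_finite by (subst card_SigmaI) auto
  also have "\<dots> = (\<Sum>a\<in>{..n}. q_res ^ (n - a) * card (congr_reps r))" by (simp add: card_cartesian_product reps_mod_card)
  finally show ?thesis by (simp add: sum_distrib_left mult.commute)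
qed

lemma rho_c_pow_card_shell_idx:
  "rho_c ^ k * of_nat (card (shell_idx k r)) = of_nat (card (congr_reps r)) * ((1 - rho_c ^ Suc k) / (1 - rho_c))"
proof -
  have "rho_c ^ k * of_nat (card (shell_idx k r)) = of_nat (card (congr_reps r)) * (\<Sum>a\<le>k. rho_c ^ k * of_nat (q_res ^ (k - a)))"
    unfolding card_shell_idx of_nat_mult of_nat_sum sum_distrib_left by (simp add: mult.left_commute)
  also have "(\<Sum>a\<le>k. rho_c ^ k * of_nat (q_res ^ (k - a))) = (\<Sum>a\<le>k. rho_c ^ a)"
  proof (rule sum.cong)
    fix a assume "a \<in> {..k}"
    thus "rho_c ^ k * of_nat (q_res ^ (k - a)) = rho_c ^ a" using rho_c_q_res_diff[of a 0 k] by simp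
  qed simp
  also have "\<dots> = (rho_c ^ Suc k - 1) / (rho_c - 1)"
    unfolding lessThan_Suc_atMost[symmetric] by (rule geometric_sum[OF q_ne_1])
  also have "\<dots> = (1 - rho_c ^ Suc k) / (1 - rho_c)"
    by (metis minus_diff_eq minus_divide_divide)
  finally show ?thesis .
qed

lemma unit_shell_coset_decomp:
  assumes r: "r \<ge> 1" and f: "\<And>M N. mdist absv M N \<le> \<rho> ^ r \<Longrightarrow> f M = f N"
  shows "(if entries_le 1 M \<and> absv (det M) = \<rho> ^ n then f M else 0)
    = (\<Sum>t\<in>shell_idx n r. f (shell_rep n t) * coset_ind r (shell_rep n t) M)"
proof (cases "entries_le 1 M \<and> absv (det M) = \<rho> ^ n")
  case True
  then obtain t0 u0 where t0: "t0 \<in> shell_idx n r" "u0 \<in> congr_subgroup r" "M = shell_rep n t0 ** u0" using shell_rep_coset_exists r by blast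
  have "coset_ind r (shell_rep n t) M = (if t = t0 then 1 else 0)" if "t \<in> shell_idx n r" for t
  proof -
    have "coset_ind r (shell_rep n t) M = (if \<exists>u\<in>congr_subgroup r. M = shell_rep n t ** u then 1 else 0)"
      using coset_ind_iff shell_rep_integral_det[OF that] by blast
    also have "(\<exists>u\<in>congr_subgroup r. M = shell_rep n t ** u) \<longleftrightarrow> t = t0"
      using shell_rep_coset_unique[OF r that t0(1) _ _ t0(2,3)] t0 by blast
    finally show ?thesis .
  qed
  hence "(\<Sum>t\<in>shell_idx n r. f (shell_rep n t) * coset_ind r (shell_rep n t) M) = (\<Sum>t\<in>shell_idx n r. if t = t0 then f (shell_rep n t) else 0)"
    by (intro sum.cong) auto
  also have "\<dots> = f (shell_rep n t0)" using t0(1) shell_idx_finite by simp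
  also have "\<dots> = f M" using f shell_rep_coset_props(3)[OF r t0] by simp
  finally show ?thesis using True by simp
next
  case False
  have "coset_ind r (shell_rep n t) M = 0" if "t \<in> shell_idx n r" for t
  proof -
    have "\<not> (\<exists>u\<in>congr_subgroup r. M = shell_rep n t ** u)" using shell_rep_coset_props[OF r that] False by blast
    thus ?thesis using coset_ind_iff shell_rep_integral_det[OF that] by simp
  qed
  hence "(\<Sum>t\<in>shell_idx n r. f (shell_rep n t) * coset_ind r (shell_rep n t) M) = 0" by simp
  thus ?thesis by (subst if_not_P[OF False]) simp
qed

end

section \<open>Haar measure and the shell integrals\<close>

locale gl2_haar = nonarch_field absv for absv :: "'a::field_char_0 \<Rightarrow> real" +
  fixes dg :: "('a mat2 \<Rightarrow> complex) \<Rightarrow> complex"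
  assumes haar: "haar absv dg"
begin

lemma dg_add: "f \<in> Sch absv GL2 \<Longrightarrow> h \<in> Sch absv GL2 \<Longrightarrow> dg (\<lambda>M. f M + h M) = dg f + dg h"
  using haar unfolding haar_def is_dist_def by blast

lemma dg_scale: "f \<in> Sch absv GL2 \<Longrightarrow> dg (\<lambda>M. c * f M) = c * dg f"
  using haar unfolding haar_def is_dist_def by blast

lemma dg_translate: "g \<in> GL2 \<Longrightarrow> f \<in> Sch absv GL2 \<Longrightarrow> dg (\<lambda>M. f (g ** M)) = dg f"
  using haar unfolding haar_def by blast

lemma dg_zero: "dg (\<lambda>M. 0) = 0"
  using dg_scale[OF GL2_step_fun_Sch[OF GL2_step_fun_zero], of 0] by simp

lemma dg_sum: "finite I \<Longrightarrow> (\<And>t. t \<in> I \<Longrightarrow> GL2_step_fun (\<phi> t)) \<Longrightarrow> dg (\<lambda>M. \<Sum>t\<in>I. \<phi> t M) = (\<Sum>t\<in>I. dg (\<phi> t))"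
proof (induction I rule: finite_induct)
  case empty thus ?case using dg_zero by simp
next
  case (insert a I)
  have "dg (\<lambda>M. \<Sum>t\<in>insert a I. \<phi> t M) = dg (\<lambda>M. \<phi> a M + (\<Sum>t\<in>I. \<phi> t M))"
    using insert by simp
  also have "\<dots> = dg (\<phi> a) + dg (\<lambda>M. \<Sum>t\<in>I. \<phi> t M)"
    using insert GL2_step_fun_sum[of I \<phi>] GL2_step_fun_Sch by (intro dg_add) auto
  finally show ?case using insert by simp
qed

definition congr_vol :: "nat \<Rightarrow> complex" where "congr_vol r = dg (congr_ind r)"

lemma dg_coset_ind:
  assumes "r \<ge> 1" "det g \<noteq> 0"
  shows "dg (coset_ind r g) = congr_vol r"
proof -
  have "inv2 g \<in> GL2" using det_inv2[OF assms(2)] assms(2) unfolding GL2_def by simp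
  thus ?thesis unfolding coset_ind_def congr_vol_def using dg_translate GL2_step_fun_Sch GL2_step_fun_congr_ind assms(1) by blast
qed

lemma dg_unit_shell_coset_sum:
  assumes r: "r \<ge> 1" and f: "\<And>M N. mdist absv M N \<le> \<rho> ^ r \<Longrightarrow> f M = f N"
  shows "dg (\<lambda>M. if entries_le 1 M \<and> absv (det M) = \<rho> ^ n then f M else 0) = congr_vol r * (\<Sum>t\<in>shell_idx n r. f (shell_rep n t))"
proof -
  have "dg (\<lambda>M. if entries_le 1 M \<and> absv (det M) = \<rho> ^ n then f M else 0) = dg (\<lambda>M. \<Sum>t\<in>shell_idx n r. f (shell_rep n t) * coset_ind r (shell_rep n t) M)"
    using unit_shell_coset_decomp[of r f, OF r f] by simp
  also have "\<dots> = (\<Sum>t\<in>shell_idx n r. dg (\<lambda>M. f (shell_rep n t) * coset_ind r (shell_rep n t) M))"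
    using shell_idx_finite GL2_step_fun_scale GL2_step_fun_coset_ind r shell_rep_integral_det by (intro dg_sum) auto
  also have "\<dots> = (\<Sum>t\<in>shell_idx n r. f (shell_rep n t) * congr_vol r)"
    using dg_scale GL2_step_fun_Sch GL2_step_fun_coset_ind r shell_rep_integral_det dg_coset_ind by (intro sum.cong) auto
  finally show ?thesis by (simp add: sum_distrib_left mult.commute)
qed

definition shell :: "('a mat2 \<Rightarrow> complex) \<Rightarrow> int \<Rightarrow> 'a mat2 \<Rightarrow> complex" where
  "shell f n = (\<lambda>M. if absv (det M) = \<rho> powi n then complex_of_real (\<rho> powi n) * f M else 0)"

definition shell_int :: "('a mat2 \<Rightarrow> complex) \<Rightarrow> int \<Rightarrow> complex" where
  "shell_int f n = dg (shell f n)"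

lemma shell_Sch: "step_fun r s f \<Longrightarrow> shell f n \<in> Sch absv GL2"
  unfolding shell_def using step_fun_det_shell GL2_step_fun_Sch by blast

lemma shell_int_add:
  assumes "f \<in> Sch absv UNIV" "h \<in> Sch absv UNIV"
  shows "shell_int (\<lambda>M. f M + h M) n = shell_int f n + shell_int h n"
proof -
  obtain r s where f: "step_fun r s f" using Sch_UNIV_step_fun assms by blast
  obtain r' s' where h: "step_fun r' s' h" using Sch_UNIV_step_fun assms by blast
  have "shell (\<lambda>M. f M + h M) n = (\<lambda>M. shell f n M + shell h n M)" unfolding shell_def by (auto simp: distrib_left)
  thus ?thesis unfolding shell_int_def using dg_add shell_Sch f h by simp
qed

lemma shell_int_scale:
  assumes "f \<in> Sch absv UNIV"
  shows "shell_int (\<lambda>M. a * f M) n = a * shell_int f n"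
proof -
  obtain r s where f: "step_fun r s f" using Sch_UNIV_step_fun assms by blast
  have "shell (\<lambda>M. a * f M) n = (\<lambda>M. a * shell f n M)" unfolding shell_def by auto
  thus ?thesis unfolding shell_int_def using dg_scale shell_Sch f by simp
qed

lemma shell_int_shift:
  assumes f: "step_fun r s f" and g: "g \<in> GL2" "absv (det g) = \<rho> powi m"
  shows "complex_of_real (\<rho> powi m) * shell_int (\<lambda>M. f (g ** M)) n = shell_int f (n + m)"
proof -
  have dg0: "det g \<noteq> 0" using g unfolding GL2_def by simp
  obtain r' s' where f': "step_fun r' s' (\<lambda>M. f (g ** M))" using step_fun_translate f dg0 by blast
  have eq: "shell f (n + m) (g ** M) = complex_of_real (\<rho> powi m) * shell (\<lambda>M. f (g ** M)) n M" for M
  proof -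
    have pm: "\<rho> powi m > 0" using rho_powi_pos by blast
    have "absv (det (g ** M)) = \<rho> powi m * absv (det M)" using g by (simp add: det_mul av_mult)
    moreover have "\<rho> powi (n + m) = \<rho> powi m * \<rho> powi n" using rho_pos by (simp add: power_int_add)
    ultimately have "(absv (det (g ** M)) = \<rho> powi (n + m)) \<longleftrightarrow> (absv (det M) = \<rho> powi n)" using pm by simp
    thus ?thesis unfolding shell_def using \<open>\<rho> powi (n + m) = \<rho> powi m * \<rho> powi n\<close> by simp
  qed
  have "shell_int f (n + m) = dg (\<lambda>M. shell f (n + m) (g ** M))" unfolding shell_int_def using dg_translate g shell_Sch f by simp
  also have "\<dots> = dg (\<lambda>M. complex_of_real (\<rho> powi m) * shell (\<lambda>M. f (g ** M)) n M)" using eq by simp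
  also have "\<dots> = complex_of_real (\<rho> powi m) * shell_int (\<lambda>M. f (g ** M)) n" unfolding shell_int_def using dg_scale shell_Sch f' by simp
  finally show ?thesis by simp
qed

lemma shell_int_low:
  assumes f: "step_fun r s f" and n: "n < - 2 * int s"
  shows "shell_int f n = 0"
proof -
  have "shell f n = (\<lambda>M. 0)"
  proof
    fix M
    show "shell f n M = 0"
    proof (cases "f M = 0")
      case False
      have "absv (det M) \<le> \<rho> powi (- 2 * int s)" using step_fun_det_le[OF f False] .
      also have "\<dots> < \<rho> powi n" using n by (simp add: rho_powi_less_iff)
      finally show ?thesis unfolding shell_def by simp
    qed (simp add: shell_def)
  qed
  thus ?thesis unfolding shell_int_def using dg_zero by simp
qed

lemma shell_int_rescale:
  assumes f: "step_fun r s f"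
  obtains f' where "step_fun (r + s) 0 f'"
    "\<And>n. shell_int f n = rho_c powi (- 2 * int s) * shell_int f' (n + 2 * int s)"
proof -
  obtain g where g: "g \<in> GL2" "absv (det g) = \<rho> powi (- 2 * int s)"
    and f': "step_fun (r + s) 0 (\<lambda>M. f (g ** M))"
    using step_fun_rescale[OF f] by blast
  have "shell_int f n = rho_c powi (- 2 * int s) * shell_int (\<lambda>M. f (g ** M)) (n + 2 * int s)" for n
    using shell_int_shift[OF f g, of "n + 2 * int s"] by simp
  with f' show ?thesis by (rule that)
qed

lemma dg_sum_shells:
  assumes g: "\<And>M. g M \<noteq> 0 \<Longrightarrow> \<exists>n\<in>{L..U}. absv (det M) = \<rho> powi n"
    and shells: "\<And>n. GL2_step_fun (\<lambda>M. if absv (det M) = \<rho> powi n then g M else 0)"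
  shows "dg g = (\<Sum>n\<in>{L..U}. dg (\<lambda>M. if absv (det M) = \<rho> powi n then g M else 0))"
proof -
  have "g M = (\<Sum>n\<in>{L..U}. if absv (det M) = \<rho> powi n then g M else 0)" for M
    using sum_det_shells[of g M, OF g[of M]] by simp
  hence "g = (\<lambda>M. \<Sum>n\<in>{L..U}. if absv (det M) = \<rho> powi n then g M else 0)" ..
  moreover have "dg (\<lambda>M. \<Sum>n\<in>{L..U}. if absv (det M) = \<rho> powi n then g M else 0) =
      (\<Sum>n\<in>{L..U}. dg (\<lambda>M. if absv (det M) = \<rho> powi n then g M else 0))"
    using shells by (intro dg_sum) auto
  ultimately show ?thesis by (simp only: eq_commute)
qed

lemma shell_int_restrict:
  assumes f: "f \<in> Sch absv GL2"
  obtains L U where "L \<le> U" "\<And>n. n < L \<or> n > U \<Longrightarrow> shell_int f n = 0"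
    "(\<Sum>n\<in>{L..U}. shell_int f n) = dg (\<lambda>M. complex_of_real (absv (det M)) * f M)"
proof -
  obtain r s where ns: "step_fun r s f" using Sch_GL2_step_fun f by blast
  obtain L U where "L \<le> U" and LU: "\<And>M. f M \<noteq> 0 \<Longrightarrow> \<exists>n\<in>{L..U}. absv (det M) = \<rho> powi n"
    using Sch_GL2_det_range f by blast
  let ?g = "\<lambda>M. complex_of_real (absv (det M)) * f M"
  have shell_eq: "shell f n = (\<lambda>M. if absv (det M) = \<rho> powi n then ?g M else 0)" for n
    unfolding shell_def by auto
  have "shell f n M = 0" if n: "n < L \<or> n > U" for n M
  proof (cases "f M = 0")
    case False
    then obtain n' where "n' \<in> {L..U}" "absv (det M) = \<rho> powi n'" using LU by blast
    hence "absv (det M) \<noteq> \<rho> powi n" using n rho_powi_inj[of n' n] by auto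
    thus ?thesis unfolding shell_def by simp
  qed (simp add: shell_def)
  hence "shell f n = (\<lambda>M. 0)" if "n < L \<or> n > U" for n
    using that by blast
  hence "shell_int f n = 0" if "n < L \<or> n > U" for n
    unfolding shell_int_def using that dg_zero by simp
  moreover have "dg ?g = (\<Sum>n\<in>{L..U}. shell_int f n)"
  proof -
    have "GL2_step_fun (shell f n)" for n unfolding shell_def by (rule step_fun_det_shell[OF ns])
    moreover have "?g M \<noteq> 0 \<Longrightarrow> \<exists>n\<in>{L..U}. absv (det M) = \<rho> powi n" for M
      using LU by (metis mult_zero_right)
    ultimately show ?thesis unfolding shell_int_def shell_eq by (rule dg_sum_shells[rotated])
  qed
  ultimately show ?thesis using that \<open>L \<le> U\<close> by simp
qed

lemma shell_int_coset_sum: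
  assumes r: "r \<ge> 1" and F: "step_fun r 0 F"
  shows "shell_int F (int n) = congr_vol r * (rho_c ^ n * (\<Sum>t\<in>shell_idx n r. F (shell_rep n t)))"
proof -
  have Fc: "\<And>M N. mdist absv M N \<le> \<rho> ^ r \<Longrightarrow> F M = F N" using F unfolding step_fun_def by blast
  have Fs: "\<And>M. F M \<noteq> 0 \<Longrightarrow> entries_le 1 M" using F unfolding step_fun_def by simp
  have "shell F (int n) = (\<lambda>M. if entries_le 1 M \<and> absv (det M) = \<rho> ^ n then rho_c ^ n * F M else 0)"
    unfolding shell_def using Fs by (auto simp: fun_eq_iff)
  hence "shell_int F (int n) = congr_vol r * (\<Sum>t\<in>shell_idx n r. rho_c ^ n * F (shell_rep n t))"
    unfolding shell_int_def using dg_unit_shell_coset_sum[OF r, of "\<lambda>M. rho_c ^ n * F M" n] Fc by simp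
  thus ?thesis by (simp add: sum_distrib_left)
qed

lemma congr_vol_nonzero_of_shell_int:
  assumes f: "step_fun r s f" and nz: "shell_int f n \<noteq> 0"
  shows "\<exists>r'\<ge>1. congr_vol r' \<noteq> 0"
proof -
  obtain f' where f': "step_fun (max r 1 + s) 0 f'"
    and eq: "shell_int f n = rho_c powi (- 2 * int s) * shell_int f' (n + 2 * int s)"
    using shell_int_rescale[OF step_fun_mono[OF f, of "max r 1" s]] by auto
  have nz': "shell_int f' (n + 2 * int s) \<noteq> 0" using nz eq by auto
  hence "n + 2 * int s \<ge> 0" using shell_int_low[OF f'] by force
  then obtain k where k: "n + 2 * int s = int k" by (metis nonneg_eq_int)
  have "shell_int f' (int k) = congr_vol (max r 1 + s) * (rho_c ^ k * (\<Sum>t\<in>shell_idx k (max r 1 + s). f' (shell_rep k t)))"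
    using shell_int_coset_sum[OF _ f'] by simp
  hence "congr_vol (max r 1 + s) \<noteq> 0" using nz' k by auto
  thus ?thesis by (intro exI[of _ "max r 1 + s"]) simp
qed

lemma congr_vol_nonzero: "\<exists>r\<ge>1. congr_vol r \<noteq> 0"
proof -
  obtain f where f: "f \<in> Sch absv GL2" "dg f \<noteq> 0" using haar unfolding haar_def by blast
  obtain r s where ns: "step_fun r s f" using Sch_GL2_step_fun f by blast
  obtain L U where LU: "\<And>M. f M \<noteq> 0 \<Longrightarrow> \<exists>n\<in>{L..U}. absv (det M) = \<rho> powi n"
    using Sch_GL2_det_range f by blast
  define h where "h n = (\<lambda>M. if absv (det M) = \<rho> powi n then f M else 0)" for n
  have hg: "GL2_step_fun (h n)" for n
    using step_fun_det_shell[OF ns, of n 1] unfolding h_def by (simp only: mult_1)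
  have "dg f = (\<Sum>n\<in>{L..U}. dg (h n))"
    unfolding h_def by (rule dg_sum_shells[OF LU hg[unfolded h_def]])
  then obtain n where "dg (h n) \<noteq> 0" using f(2) by (metis sum.neutral)
  moreover have "shell f n = (\<lambda>M. rho_c powi n * h n M)" unfolding shell_def h_def by auto
  hence "shell_int f n = rho_c powi n * dg (h n)" unfolding shell_int_def using dg_scale GL2_step_fun_Sch hg by simp
  ultimately have "shell_int f n \<noteq> 0" using rho_pos by simp
  thus ?thesis using congr_vol_nonzero_of_shell_int[OF ns] by blast
qed

lemma shell_int_eventual_unit_ball:
  assumes r: "r \<ge> 1" and F: "step_fun r 0 F"
  shows "\<exists>A B. \<forall>n::nat\<ge>2*r. shell_int F (int n) = A + B * rho_c ^ n"
proof -
  have Fc: "\<And>M N. mdist absv M N \<le> \<rho> ^ r \<Longrightarrow> F M = F N" using F unfolding step_fun_def by blast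
  have "\<forall>k\<in>congr_reps r. \<exists>\<alpha> \<beta>. \<forall>n\<ge>2*r. rho_c ^ n * hermite_sum n (\<lambda>M. F (M ** k)) = \<alpha> + \<beta> * rho_c ^ n"
  proof
    fix k assume k: "k \<in> congr_reps r"
    have kb: "entries_le 1 k" using congr_reps_GL2_O[OF k] unfolding GL2_O_def by simp
    show "\<exists>\<alpha> \<beta>. \<forall>n\<ge>2*r. rho_c ^ n * hermite_sum n (\<lambda>M. F (M ** k)) = \<alpha> + \<beta> * rho_c ^ n"
    proof (rule hermite_sum_eventually[OF r])
      fix M N assume "mdist absv M N \<le> \<rho> ^ r"
      hence "mdist absv (M ** k) (N ** k) \<le> \<rho> ^ r" using mdist_mult_right[OF kb, of M N] by linarith
      thus "F (M ** k) = F (N ** k)" using Fc by blast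
    qed
  qed
  then obtain \<alpha> where "\<forall>k\<in>congr_reps r. \<exists>\<beta>. \<forall>n\<ge>2*r. rho_c ^ n * hermite_sum n (\<lambda>M. F (M ** k)) = \<alpha> k + \<beta> * rho_c ^ n"
    by (metis (no_types) bchoice)
  then obtain \<beta> where ab: "\<forall>k\<in>congr_reps r. \<forall>n\<ge>2*r. rho_c ^ n * hermite_sum n (\<lambda>M. F (M ** k)) = \<alpha> k + \<beta> k * rho_c ^ n"
    by (metis (no_types) bchoice)
  have "shell_int F (int n) = congr_vol r * (\<Sum>k\<in>congr_reps r. \<alpha> k) + congr_vol r * (\<Sum>k\<in>congr_reps r. \<beta> k) * rho_c ^ n" if n: "n \<ge> 2*r" for n
  proof -
    have "shell_int F (int n) = congr_vol r * (\<Sum>k\<in>congr_reps r. rho_c ^ n * hermite_sum n (\<lambda>M. F (M ** k)))"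
      unfolding shell_int_coset_sum[OF r F] shell_idx_sum sum_distrib_left ..
    also have "\<dots> = congr_vol r * (\<Sum>k\<in>congr_reps r. \<alpha> k + \<beta> k * rho_c ^ n)" using ab n by simp
    finally show ?thesis by (simp add: sum.distrib sum_distrib_right distrib_left mult.assoc)
  qed
  thus ?thesis by blast
qed

lemma shell_int_eventual:
  assumes f: "f \<in> Sch absv UNIV"
  shows "\<exists>N A B. \<forall>n\<ge>N. shell_int f n = A + B * rho_c powi n"
proof -
  obtain r0 s where f0: "step_fun r0 s f" using Sch_UNIV_step_fun f by blast
  define r where "r = max r0 1 + s"
  obtain f' where f': "step_fun r 0 f'"
    and eq: "\<And>n. shell_int f n = rho_c powi (- 2 * int s) * shell_int f' (n + 2 * int s)"
    using shell_int_rescale[OF step_fun_mono[OF f0, of "max r0 1" s]] unfolding r_def by auto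
  have "r \<ge> 1" unfolding r_def by simp
  then obtain A B where AB: "\<forall>k\<ge>2 * r. shell_int f' (int k) = A + B * rho_c ^ k"
    using shell_int_eventual_unit_ball[OF _ f'] by blast
  have "shell_int f n = rho_c powi (- 2 * int s) * A + B * rho_c powi n" if n: "n \<ge> 2 * int r" for n
  proof -
    define k where "k = nat (n + 2 * int s)"
    have k: "int k = n + 2 * int s" "2 * r \<le> k" using n unfolding k_def by auto
    have "shell_int f' (int k) = A + B * rho_c ^ k" using AB k(2) by blast
    hence "shell_int f' (n + 2 * int s) = A + B * rho_c powi (n + 2 * int s)"
      unfolding k(1)[symmetric] power_int_of_nat .
    hence "shell_int f n = rho_c powi (- 2 * int s) * (A + B * rho_c powi (n + 2 * int s))"
      using eq[of n] by simp
    also have "\<dots> = rho_c powi (- 2 * int s) * A + B * rho_c powi n"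
      using q_powi_add[of "- 2 * int s" "n + 2 * int s"] by (simp add: algebra_simps)
    finally show ?thesis .
  qed
  thus ?thesis by blast
qed

lemma shell_int_unit_ball_ind:
  assumes r: "r \<ge> 1" "congr_vol r \<noteq> 0"
  shows "\<exists>A B. A \<noteq> 0 \<and> geom_tail (shell_int unit_ball_ind) 0 0 A B"
proof -
  define W where "W = congr_vol r * of_nat (card (congr_reps r))"
  define A where "A = W / (1 - rho_c)"
  have "W \<noteq> 0" unfolding W_def using r congr_reps_nonempty[OF r(1)] congr_reps_finite[of r] by simp
  hence "A \<noteq> 0" unfolding A_def using q_ne_1 by simp
  have k: "shell_int unit_ball_ind (int k) = A + (- A * rho_c) * rho_c powi int k" for k
  proof -
    have "(\<Sum>t\<in>shell_idx k r. unit_ball_ind (shell_rep k t)) = of_nat (card (shell_idx k r))"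
      using shell_rep_integral_det unfolding unit_ball_ind_def by simp
    hence "shell_int unit_ball_ind (int k) = W * ((1 - rho_c ^ Suc k) / (1 - rho_c))"
      using shell_int_coset_sum[OF r(1) unit_ball_ind_step_fun] rho_c_pow_card_shell_idx
      unfolding W_def by (simp add: mult.assoc)
    also have "\<dots> = A * (1 - rho_c * rho_c ^ k)" unfolding A_def by simp
    finally show ?thesis by (simp add: power_int_of_nat algebra_simps)
  qed
  have "shell_int unit_ball_ind n = A + (- A * rho_c) * rho_c powi n" if "n \<ge> 0" for n
    using k[of "nat n"] that by simp
  moreover have "shell_int unit_ball_ind n = 0" if "n < 0" for n
    using shell_int_low[OF unit_ball_ind_step_fun] that by simp
  ultimately have "geom_tail (shell_int unit_ball_ind) 0 0 A (- A * rho_c)"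
    unfolding geom_tail_def by simp
  thus ?thesis using \<open>A \<noteq> 0\<close> by blast
qed

section \<open>The extension \<open>D\<^sub>1\<close>\<close>

lemma shell_int_geom_tail:
  assumes "f \<in> Sch absv UNIV"
  shows "\<exists>L N A B. geom_tail (shell_int f) L N A B"
proof -
  obtain r s where ns: "step_fun r s f" using Sch_UNIV_step_fun assms by blast
  obtain N0 A B where ev: "\<forall>n\<ge>N0. shell_int f n = A + B * rho_c powi n" using shell_int_eventual assms by blast
  have "geom_tail (shell_int f) (- 2 * int s) (max N0 (- 2 * int s)) A B"
    unfolding geom_tail_def using ev shell_int_low[OF ns] by auto
  thus ?thesis by blast
qed

definition D1 :: "('a mat2 \<Rightarrow> complex) \<Rightarrow> complex" where "D1 f = reg_sum (shell_int f)"

lemma shell_int_translate_geom_tail: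
  assumes f: "f \<in> Sch absv UNIV" and g: "g \<in> GL2" "absv (det g) = \<rho> powi m"
    and tail: "geom_tail (shell_int (\<lambda>M. f (g ** M))) L N A B"
  shows "geom_tail (\<lambda>n. shell_int f (n + m)) L N (rho_c powi m * A) (rho_c powi m * B)"
proof -
  obtain r s where "step_fun r s f" using Sch_UNIV_step_fun f by blast
  hence "(\<lambda>n. rho_c powi m * shell_int (\<lambda>M. f (g ** M)) n) = (\<lambda>n. shell_int f (n + m))"
    using shell_int_shift[OF _ g] by simp
  thus ?thesis using geom_tail_scale[OF tail, of "rho_c powi m"] by simp
qed

lemma tail_const_shell_int_translate:
  assumes f: "f \<in> Sch absv UNIV" and g: "g \<in> GL2" "absv (det g) = \<rho> powi m"
  shows "rho_c powi m * tail_const (shell_int (\<lambda>M. f (g ** M))) = tail_const (shell_int f)"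
proof -
  obtain L N A B where v1: "geom_tail (shell_int (\<lambda>M. f (g ** M))) L N A B"
    using shell_int_geom_tail Sch_UNIV_translate f g(1) by blast
  obtain L' N' A' B' where v2: "geom_tail (shell_int f) L' N' A' B'" using shell_int_geom_tail f by blast
  have "rho_c powi m * A = A'"
    using tail_const_eq[OF shell_int_translate_geom_tail[OF f g v1]] tail_const_eq[OF geom_tail_shift[OF v2]] by simp
  thus ?thesis using tail_const_eq[OF v1] tail_const_eq[OF v2] by simp
qed

lemma act_D1:
  assumes f: "f \<in> Sch absv UNIV" and g: "g \<in> GL2" "absv (det g) = \<rho> powi m"
  shows "act absv g D1 f = D1 f + of_int m * tail_const (shell_int f)"
proof -
  obtain L N A B where v1: "geom_tail (shell_int (\<lambda>M. f (g ** M))) L N A B"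
    using shell_int_geom_tail Sch_UNIV_translate f g(1) by blast
  obtain L' N' A' B' where v2: "geom_tail (shell_int f) L' N' A' B'" using shell_int_geom_tail f by blast
  have "(\<lambda>n. rho_c powi m * shell_int (\<lambda>M. f (g ** M)) n) = (\<lambda>n. shell_int f (n + m))"
    using Sch_UNIV_step_fun[OF f] shell_int_shift[OF _ g] by auto
  hence "act absv g D1 f = reg_sum (\<lambda>n. shell_int f (n + m))"
    unfolding act_def D1_def using g(2) reg_sum_scale[OF v1, of "rho_c powi m"] by simp
  also have "\<dots> = D1 f + of_int m * A'" unfolding D1_def using reg_sum_shift[OF v2] .
  finally show ?thesis using tail_const_eq[OF v2] by simp
qed

lemma GL2_abs_det: "g \<in> GL2 \<Longrightarrow> \<exists>m. absv (det g) = \<rho> powi m"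
  unfolding GL2_def using av_eq_rho_powi by simp

lemma D1_is_dist: "is_dist absv UNIV D1"
  unfolding is_dist_def
proof (intro ballI allI conjI)
  fix f h and c :: complex assume f: "f \<in> Sch absv UNIV" and h: "h \<in> Sch absv UNIV"
  obtain L N A B where vf: "geom_tail (shell_int f) L N A B" using shell_int_geom_tail f by blast
  obtain L' N' A' B' where vh: "geom_tail (shell_int h) L' N' A' B'" using shell_int_geom_tail h by blast
  have "shell_int (\<lambda>M. f M + h M) = (\<lambda>n. shell_int f n + shell_int h n)" using shell_int_add[OF f h] by (simp add: fun_eq_iff)
  thus "D1 (\<lambda>M. f M + h M) = D1 f + D1 h" unfolding D1_def using reg_sum_add[OF vf vh] by simp
  have "shell_int (\<lambda>M. c * f M) = (\<lambda>n. c * shell_int f n)" using shell_int_scale[OF f] by (simp add: fun_eq_iff)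
  thus "D1 (\<lambda>M. c * f M) = c * D1 f" unfolding D1_def using reg_sum_scale[OF vf] by simp
qed

lemma D1_restrict:
  assumes f: "f \<in> Sch absv GL2"
  shows "D1 f = dg (\<lambda>M. complex_of_real (absv (det M)) * f M)"
proof -
  obtain L U where LU: "L \<le> U" "\<And>n. n < L \<or> n > U \<Longrightarrow> shell_int f n = 0"
    "(\<Sum>n\<in>{L..U}. shell_int f n) = dg (\<lambda>M. complex_of_real (absv (det M)) * f M)"
    using shell_int_restrict[OF f] by blast
  have "reg_sum (shell_int f) = (\<Sum>n\<in>{L..<U+1}. shell_int f n)" using LU by (intro reg_sum_finite) auto
  also have "{L..<U+1} = {L..U}" by auto
  finally show ?thesis unfolding D1_def using LU(3) by simp
qed

lemma D1_gen_invariant: "gen_invariant1 absv UNIV D1"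
  unfolding gen_invariant1_def
proof (intro exI[of _ 1] allI impI ballI)
  fix gs :: "'a mat2 list" and f assume len: "length gs = Suc 1" and sub: "set gs \<subseteq> GL2" and f: "f \<in> Sch absv UNIV"
  obtain g0 g1 where gs: "gs = [g0, g1]" using len by (auto simp: length_Suc_conv)
  have g0: "g0 \<in> GL2" and g1: "g1 \<in> GL2" using sub gs by auto
  obtain m0 where m0: "absv (det g0) = \<rho> powi m0" using GL2_abs_det g0 by blast
  obtain m1 where m1: "absv (det g1) = \<rho> powi m1" using GL2_abs_det g1 by blast
  define E where "E = (\<lambda>f. act absv g1 D1 f - D1 f)"
  have E: "E h = of_int m1 * tail_const (shell_int h)" if "h \<in> Sch absv UNIV" for h
    unfolding E_def using act_D1[OF that g1 m1] by simp
  have f0: "(\<lambda>M. f (g0 ** M)) \<in> Sch absv UNIV" using Sch_UNIV_translate f g0 by blast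
  have "iter_op absv gs D1 f = act absv g0 E f - E f" unfolding iter_op_def gs E_def by simp
  also have "act absv g0 E f = complex_of_real (\<rho> powi m0) * (of_int m1 * tail_const (shell_int (\<lambda>M. f (g0 ** M))))"
    unfolding act_def using E[OF f0] m0 by simp
  also have "\<dots> = of_int m1 * tail_const (shell_int f)" using tail_const_shell_int_translate[OF f g0 m0] by (simp add: algebra_simps)
  also have "E f = of_int m1 * tail_const (shell_int f)" using E[OF f] .
  finally show "iter_op absv gs D1 f = 0" by simp
qed

lemma D1_not_invariant: "\<not> invariant1 absv UNIV D1"
proof
  assume inv: "invariant1 absv UNIV D1"
  obtain r where r: "r \<ge> 1" "congr_vol r \<noteq> 0" using congr_vol_nonzero by blast
  obtain A B where AB: "A \<noteq> 0" "geom_tail (shell_int unit_ball_ind) 0 0 A B" using shell_int_unit_ball_ind[OF r] by blast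
  have p0: "unit_ball_ind \<in> Sch absv UNIV" using unit_ball_ind_step_fun by (rule step_fun_Sch_UNIV)
  define g :: "'a mat2" where "g = mat unif"
  have dg: "det g = unif * unif" unfolding g_def det_2 by simp
  have gG: "g \<in> GL2" unfolding GL2_def using dg by simp
  have m: "absv (det g) = \<rho> powi 2" using dg by (simp add: av_mult power2_eq_square)
  have "act absv g D1 unit_ball_ind = D1 unit_ball_ind + of_int 2 * tail_const (shell_int unit_ball_ind)"
    using act_D1[OF p0 gG m] .
  moreover have "act absv g D1 unit_ball_ind = D1 unit_ball_ind" using inv gG p0 unfolding invariant1_def by blast
  ultimately have "tail_const (shell_int unit_ball_ind) = 0" by simp
  thus False using tail_const_eq[OF AB(2)] AB(1) by simp
qed

end

theorem lemma2p7:
  fixes absv :: "'a::field_char_0 \<Rightarrow> real"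
    and dg :: "('a mat2 \<Rightarrow> complex) \<Rightarrow> complex"
  assumes "nonarch_local_field absv"
    and "haar absv dg"
  shows "\<exists>D1. is_dist absv UNIV D1 \<and>
     (\<forall>f\<in>Sch absv GL2. D1 f = dg (\<lambda>M. complex_of_real (absv (det M)) * f M)) \<and>
     gen_invariant1 absv UNIV D1 \<and> \<not> invariant1 absv UNIV D1"
proof -
  interpret gl2_haar absv dg
    using assms by unfold_locales
  show ?thesis
    using D1_is_dist D1_restrict D1_gen_invariant D1_not_invariant by blast
qed

end
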